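(* Let $R_1,R_2$ be discrete valuation domains with maximal ideals $P_1=R_1p_1$ and $P_2=R_2p_2$, let $\overline{R}$ be a field, $\mathcal{V}_i:R_i\to\overline{R}$ surjective ring homomorphisms with $\ker\mathcal{V}_i=P_i$, and $R=\{(r_1,r_2)\in R_1\times R_2:\mathcal{V}_1(r_1)=\mathcal{V}_2(r_2)\}$. Let $M$ be a non-separated $R$-module and let $0\to K\xrightarrow{i}S\xrightarrow{\varphi}M\to0$ be a separated representation of $M$. Then $M$ is a pseudo-absorbing primary multiplication $R$-module if and only if $S$ is a pseudo-absorbing primary multiplication $R$-module.
   Context: $R$ is local with maximal ideal $P=P_1\oplus P_2=\{(a,b):a\in P_1,b\in P_2\}$. For an $R$-module $S$, $P_1S$ means $(P_1\oplus 0)S$ with $P_1\oplus0=\{(a,0):a\in P_1\}$, and $P_2S$ means $(0\oplus P_2)S$ with $0\oplus P_2=\{(0,b):b\in P_2\}$. An $R$-module $S$ is separated if $P_1S\cap P_2S=0$. A separated representation of an $R$-module $M$ is a surjective $R$-homomorphism $\varphi:S\to M$ with $S$ separated such that whenever $\varphi$ factors as $S\xrightarrow{f}S'\to M$ with $S'$ a separated $R$-module, $f$ is injective; $K=\ker\varphi$ and $i$ is the inclusion. A proper ideal $I$ of a commutative ring is 2-absorbing primary if whenever $abc\in I$ then $ab\in I$ or $ac\in\sqrt I$ or $bc\in\sqrt I$. A proper submodule $N$ of an $R$-module $M$ is pseudo-absorbing primary if $(N:_RM)=\{r\in R:rM\subseteq N\}$ is a 2-absorbing primary ideal of $R$. $M$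 is a pseudo-absorbing primary multiplication module if for every pseudo-absorbing primary submodule $N$ of $M$ there is an ideal $I$ of $R$ with $N=IM$. *)

theory Defs
  imports "HOL-Algebra.Algebra"
begin

(* Discrete valuation domain with maximal ideal P: a local principal ideal domain
   (unique maximal ideal P) that is not a field (P \<noteq> 0). *)
definition dvr :: "('a, 'm) ring_scheme \<Rightarrow> 'a set \<Rightarrow> bool" where
  "dvr R P \<longleftrightarrow> principal_domain R \<and> maximalideal P R \<and>
     (\<forall>I. maximalideal I R \<longrightarrow> I = P) \<and> P \<noteq> {\<zero>\<^bsub>R\<^esub>}"

definition pullback_ring ::
  "('a, 'm) ring_scheme \<Rightarrow> ('b, 'n) ring_scheme \<Rightarrow> ('a \<Rightarrow> 'c) \<Rightarrow> ('b \<Rightarrow> 'c) \<Rightarrow> ('a \<times> 'b) ring" where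
  "pullback_ring R1 R2 V1 V2 = (RDirProd R1 R2)
     \<lparr>carrier := {(r1, r2). r1 \<in> carrier R1 \<and> r2 \<in> carrier R2 \<and> V1 r1 = V2 r2}\<rparr>"

definition mod_hom ::
  "('r, 'x) ring_scheme \<Rightarrow> ('r, 's, 'u) module_scheme \<Rightarrow> ('r, 't, 'v) module_scheme \<Rightarrow> ('s \<Rightarrow> 't) \<Rightarrow> bool" where
  "mod_hom R S M f \<longleftrightarrow> f \<in> carrier S \<rightarrow> carrier M \<and>
     (\<forall>x\<in>carrier S. \<forall>y\<in>carrier S. f (x \<oplus>\<^bsub>S\<^esub> y) = f x \<oplus>\<^bsub>M\<^esub> f y) \<and>
     (\<forall>r\<in>carrier R. \<forall>x\<in>carrier S. f (r \<odot>\<^bsub>S\<^esub> x) = r \<odot>\<^bsub>M\<^esub> f x)"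

definition ideal_mod_prod ::
  "'r set \<Rightarrow> ('r, 'x) ring_scheme \<Rightarrow> ('r, 's, 'u) module_scheme \<Rightarrow> 's set" where
  "ideal_mod_prod I R M = \<Inter> {N. submodule N R M \<and> (\<forall>r\<in>I. \<forall>m\<in>carrier M. r \<odot>\<^bsub>M\<^esub> m \<in> N)}"

definition separated ::
  "('a \<times> 'b) ring \<Rightarrow> ('a, 'm) ring_scheme \<Rightarrow> ('b, 'n) ring_scheme \<Rightarrow> 'a set \<Rightarrow> 'b set
     \<Rightarrow> ('a \<times> 'b, 's) module \<Rightarrow> bool" where
  "separated R R1 R2 P1 P2 S \<longleftrightarrow>
     ideal_mod_prod {(a, \<zero>\<^bsub>R2\<^esub>) | a. a \<in> P1} R S \<inter> ideal_mod_prod {(\<zero>\<^bsub>R1\<^esub>, b) | b. b \<in> P2} R S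
       = {\<zero>\<^bsub>S\<^esub>}"

(* separated representation \<phi> : S \<rightarrow> M.  The competing separated modules S' range over
   modules with carrier in the same type as S. *)
definition sep_rep ::
  "('a \<times> 'b) ring \<Rightarrow> ('a, 'm) ring_scheme \<Rightarrow> ('b, 'n) ring_scheme \<Rightarrow> 'a set \<Rightarrow> 'b set
     \<Rightarrow> ('a \<times> 'b, 's) module \<Rightarrow> ('a \<times> 'b, 't) module \<Rightarrow> ('s \<Rightarrow> 't) \<Rightarrow> bool" where
  "sep_rep R R1 R2 P1 P2 S M \<phi> \<longleftrightarrow>
     module R S \<and> separated R R1 R2 P1 P2 S \<and> mod_hom R S M \<phi> \<and> \<phi> ` carrier S = carrier M \<and>
     (\<forall>(S' :: ('a \<times> 'b, 's) module) f g.
        module R S' \<and> separated R R1 R2 P1 P2 S' \<and> mod_hom R S S' f \<and> mod_hom R S' M g \<and>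
        (\<forall>s\<in>carrier S. g (f s) = \<phi> s) \<longrightarrow> inj_on f (carrier S))"

definition rad :: "('a, 'm) ring_scheme \<Rightarrow> 'a set \<Rightarrow> 'a set" where
  "rad R I = {a \<in> carrier R. \<exists>n::nat. a [^]\<^bsub>R\<^esub> n \<in> I}"

definition two_absorbing_primary :: "('a, 'm) ring_scheme \<Rightarrow> 'a set \<Rightarrow> bool" where
  "two_absorbing_primary R I \<longleftrightarrow> ideal I R \<and> I \<noteq> carrier R \<and>
     (\<forall>a\<in>carrier R. \<forall>b\<in>carrier R. \<forall>c\<in>carrier R.
        a \<otimes>\<^bsub>R\<^esub> b \<otimes>\<^bsub>R\<^esub> c \<in> I \<longrightarrow>
        a \<otimes>\<^bsub>R\<^esub> b \<in> I \<or> a \<otimes>\<^bsub>R\<^esub> c \<in> rad R I \<or> b \<otimes>\<^bsub>R\<^esub> c \<in> rad R I)"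

definition mod_colon ::
  "('r, 'x) ring_scheme \<Rightarrow> 's set \<Rightarrow> ('r, 's, 'u) module_scheme \<Rightarrow> 'r set" where
  "mod_colon R N M = {r \<in> carrier R. \<forall>m\<in>carrier M. r \<odot>\<^bsub>M\<^esub> m \<in> N}"

definition pseudo_absorbing_primary ::
  "('r, 'x) ring_scheme \<Rightarrow> ('r, 's, 'u) module_scheme \<Rightarrow> 's set \<Rightarrow> bool" where
  "pseudo_absorbing_primary R M N \<longleftrightarrow> submodule N R M \<and> N \<noteq> carrier M \<and>
     two_absorbing_primary R (mod_colon R N M)"

definition pap_multiplication_module ::
  "('r, 'x) ring_scheme \<Rightarrow> ('r, 's, 'u) module_scheme \<Rightarrow> bool" where
  "pap_multiplication_module R M \<longleftrightarrow>
     (\<forall>N. pseudo_absorbing_primary R M N \<longrightarrow> (\<exists>I. ideal I R \<and> N = ideal_mod_prod I R M))"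

end

theory Submission
  imports Defs
begin

text \<open>The pullback \<open>R\<close> is a local ring with maximal ideal \<open>P = P\<^sub>1 \<oplus> P\<^sub>2\<close>, and every proper ideal
  \<open>J\<close> of \<open>R\<close> is 2-absorbing primary: a power of an element \<open>y \<in> P\<close> lies in \<open>J\<close> as soon as
  some \<open>z \<in> J\<close> vanishes in no component in which \<open>y\<close> does not, because \<open>R\<^sub>1\<close> and \<open>R\<^sub>2\<close>
  are discrete valuation rings. Hence the pseudo-absorbing primary submodules are simply the proper
  submodules, and a pseudo-absorbing primary multiplication module is a multiplication module.
  Over the local ring \<open>R\<close> a nonzero multiplication module is cyclic (a Nakayama argument), cyclic
  modules are multiplication modules, and homomorphic images of multiplication modules are again
  multiplication modules; this gives the direction from \<open>S\<close> to \<open>M\<close>.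

  For the converse it remains to lift cyclicity from \<open>M\<close> to \<open>S\<close>. Minimality of the separated
  representation shows that the kernel \<open>K\<close> meets \<open>P\<^sub>1 S\<close> and \<open>P\<^sub>2 S\<close> trivially, so that
  \<open>P K = 0\<close>, and then that \<open>K\<close> lies in \<open>R s\<close> for any preimage \<open>s\<close> of a generator of \<open>M\<close>.
  The hypothesis that \<open>M\<close> is not separated is only needed to ensure \<open>M \<noteq> 0\<close>.\<close>

context module
begin

lemma submodule_zero: "submodule N R M \<Longrightarrow> \<zero>\<^bsub>M\<^esub> \<in> N"
  by (metis submodule.axioms(1) subgroup.one_closed monoid.simps(2))

lemma submodule_minus: "submodule N R M \<Longrightarrow> a \<in> N \<Longrightarrow> b \<in> N \<Longrightarrow> a \<ominus>\<^bsub>M\<^esub> b \<in> N"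
  unfolding a_minus_def by (meson submoduleE(3) submoduleE(5))

lemma submodule_Int: "submodule A R M \<Longrightarrow> submodule B R M \<Longrightarrow> submodule (A \<inter> B) R M"
  by (rule submoduleI) (auto dest: submoduleE submodule_zero)

lemma minus_add_cancel: "x \<in> carrier M \<Longrightarrow> y \<in> carrier M \<Longrightarrow> (x \<ominus>\<^bsub>M\<^esub> y) \<oplus>\<^bsub>M\<^esub> y = x"
  unfolding a_minus_def by (simp add: M.add.m_assoc M.l_neg)

lemma minus_eq_zero_imp_eq: "x \<in> carrier M \<Longrightarrow> y \<in> carrier M \<Longrightarrow> x \<ominus>\<^bsub>M\<^esub> y = \<zero>\<^bsub>M\<^esub> \<Longrightarrow> x = y"
  using minus_add_cancel by (metis M.l_zero)

lemma minus_minus_cancel: "x \<in> carrier M \<Longrightarrow> y \<in> carrier M \<Longrightarrow> x \<ominus>\<^bsub>M\<^esub> (x \<ominus>\<^bsub>M\<^esub> y) = y"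
  unfolding a_minus_def by (simp add: M.minus_add M.minus_minus M.add.m_assoc[symmetric] M.r_neg)

lemma minus_zero_right: "x \<in> carrier M \<Longrightarrow> x \<ominus>\<^bsub>M\<^esub> \<zero>\<^bsub>M\<^esub> = x"
  unfolding a_minus_def by (metis M.l_neg M.r_zero M.zero_closed M.add.inv_closed)

lemma zero_submodule: "submodule {\<zero>\<^bsub>M\<^esub>} R M"
  by (rule submoduleI) (auto simp: minus_zero_right[of "\<zero>\<^bsub>M\<^esub>", unfolded a_minus_def, simplified])

lemma ideal_mod_prod_smult_mem: "r \<in> I \<Longrightarrow> m \<in> carrier M \<Longrightarrow> r \<odot>\<^bsub>M\<^esub> m \<in> ideal_mod_prod I R M"
  unfolding ideal_mod_prod_def by auto

lemma ideal_mod_prod_least: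
  "submodule N R M \<Longrightarrow> (\<And>r m. r \<in> I \<Longrightarrow> m \<in> carrier M \<Longrightarrow> r \<odot>\<^bsub>M\<^esub> m \<in> N) \<Longrightarrow> ideal_mod_prod I R M \<subseteq> N"
  unfolding ideal_mod_prod_def by auto

lemma submodule_ideal_mod_prod:
  assumes "I \<subseteq> carrier R"
  shows "submodule (ideal_mod_prod I R M) R M"
proof -
  let ?F = "{N. submodule N R M \<and> (\<forall>r\<in>I. \<forall>m\<in>carrier M. r \<odot>\<^bsub>M\<^esub> m \<in> N)}"
  have "carrier M \<in> ?F" using carrier_is_submodule assms by auto
  then show ?thesis
    unfolding ideal_mod_prod_def
  proof (intro submoduleI)
    show "\<zero>\<^bsub>M\<^esub> \<in> \<Inter> ?F" using submodule_zero by blast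
    show "\<ominus>\<^bsub>M\<^esub> a \<in> \<Inter> ?F" if "a \<in> \<Inter> ?F" for a using that submoduleE(3) by blast
    show "a \<oplus>\<^bsub>M\<^esub> b \<in> \<Inter> ?F" if "a \<in> \<Inter> ?F" "b \<in> \<Inter> ?F" for a b
      using that submoduleE(5) by blast
    show "a \<odot>\<^bsub>M\<^esub> x \<in> \<Inter> ?F" if "a \<in> carrier R" "x \<in> \<Inter> ?F" for a x
      using that submoduleE(4) by blast
  qed blast
qed

lemma ideal_mod_prod_mono:
  "I \<subseteq> J \<Longrightarrow> J \<subseteq> carrier R \<Longrightarrow> ideal_mod_prod I R M \<subseteq> ideal_mod_prod J R M"
  by (rule ideal_mod_prod_least[OF submodule_ideal_mod_prod]) (auto intro: ideal_mod_prod_smult_mem)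

lemma ideal_mod_prod_carrier: "ideal_mod_prod (carrier R) R M = carrier M"
  using ideal_mod_prod_smult_mem[of \<one> "carrier R"] submoduleE(1)[OF submodule_ideal_mod_prod]
  by force

lemma mod_hom_abelian_group_hom:
  assumes N: "module R N" and f: "mod_hom R M N f"
  shows "abelian_group_hom M N f"
proof -
  interpret N: module R N by (rule N)
  show ?thesis
    using f unfolding mod_hom_def
    by (intro abelian_group_homI abelian_group_axioms N.abelian_group_axioms
        group_hom.intro group_hom_axioms.intro homI add.is_group N.add.is_group) auto
qed

lemma mod_hom_minus:
  assumes N: "module R N" and f: "mod_hom R M N f" and "x \<in> carrier M" "y \<in> carrier M"
  shows "f (x \<ominus>\<^bsub>M\<^esub> y) = f x \<ominus>\<^bsub>N\<^esub> f y"
proof -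
  interpret f: abelian_group_hom M N f by (rule mod_hom_abelian_group_hom[OF N f])
  show ?thesis using assms(3,4) by (simp add: a_minus_def)
qed

lemma submodule_vimage:
  assumes N: "module R N" and f: "mod_hom R M N f" and W: "submodule W R N"
  shows "submodule {x \<in> carrier M. f x \<in> W} R M"
proof -
  interpret N: module R N by (rule N)
  interpret f: abelian_group_hom M N f by (rule mod_hom_abelian_group_hom[OF N f])
  have f_smult: "f (r \<odot>\<^bsub>M\<^esub> x) = r \<odot>\<^bsub>N\<^esub> f x" if "r \<in> carrier R" "x \<in> carrier M" for r x
    using f that unfolding mod_hom_def by blast
  show ?thesis
  proof (rule submoduleI)
    show "\<zero>\<^bsub>M\<^esub> \<in> {x \<in> carrier M. f x \<in> W}" using N.submodule_zero[OF W] by simp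
    show "\<ominus>\<^bsub>M\<^esub> a \<in> {x \<in> carrier M. f x \<in> W}" if "a \<in> {x \<in> carrier M. f x \<in> W}" for a
      using that N.submoduleE(3)[OF W] by simp
    show "a \<oplus>\<^bsub>M\<^esub> b \<in> {x \<in> carrier M. f x \<in> W}"
      if "a \<in> {x \<in> carrier M. f x \<in> W}" "b \<in> {x \<in> carrier M. f x \<in> W}" for a b
      using that N.submoduleE(5)[OF W] by simp
    show "r \<odot>\<^bsub>M\<^esub> a \<in> {x \<in> carrier M. f x \<in> W}" if "r \<in> carrier R" "a \<in> {x \<in> carrier M. f x \<in> W}" for r a
      using that N.submoduleE(4)[OF W] by (simp add: f_smult)
  qed blast
qed

lemma submodule_kernel:
  "module R N \<Longrightarrow> mod_hom R M N f \<Longrightarrow> submodule {x \<in> carrier M. f x = \<zero>\<^bsub>N\<^esub>} R M"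
  using submodule_vimage[OF _ _ module.zero_submodule] by simp

lemma submodule_image:
  assumes N: "module R N" and f: "mod_hom R M N f" and A: "submodule A R M"
  shows "submodule (f ` A) R N"
proof -
  interpret N: module R N by (rule N)
  interpret f: abelian_group_hom M N f by (rule mod_hom_abelian_group_hom[OF N f])
  have A_carrier: "A \<subseteq> carrier M" using submoduleE(1)[OF A] .
  have f_smult: "f (r \<odot>\<^bsub>M\<^esub> x) = r \<odot>\<^bsub>N\<^esub> f x" if "r \<in> carrier R" "x \<in> carrier M" for r x
    using f that unfolding mod_hom_def by blast
  show ?thesis
  proof (rule N.submoduleI)
    show "f ` A \<subseteq> carrier N" using A_carrier by auto
    show "\<zero>\<^bsub>N\<^esub> \<in> f ` A" using submodule_zero[OF A] f.hom_zero by force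
    show "\<ominus>\<^bsub>N\<^esub> y \<in> f ` A" if "y \<in> f ` A" for y
    proof -
      from that obtain x where "x \<in> A" "y = f x" by blast
      then show ?thesis using A_carrier submoduleE(3)[OF A] by (force simp flip: f.hom_a_inv)
    qed
    show "y \<oplus>\<^bsub>N\<^esub> z \<in> f ` A" if "y \<in> f ` A" "z \<in> f ` A" for y z
    proof -
      from that obtain x x' where "x \<in> A" "y = f x" "x' \<in> A" "z = f x'" by blast
      then have "y \<oplus>\<^bsub>N\<^esub> z = f (x \<oplus>\<^bsub>M\<^esub> x')" using A_carrier by (metis f.hom_add subsetD)
      then show ?thesis using submoduleE(5)[OF A] \<open>x \<in> A\<close> \<open>x' \<in> A\<close> by blast
    qed
    show "r \<odot>\<^bsub>N\<^esub> y \<in> f ` A" if "r \<in> carrier R" "y \<in> f ` A" for r y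
    proof -
      from that obtain x where "x \<in> A" "y = f x" by blast
      then show ?thesis using that(1) A_carrier submoduleE(4)[OF A] by (force simp flip: f_smult)
    qed
  qed
qed

lemma ideal_mod_prod_image:
  assumes N: "module R N" and f: "mod_hom R M N f" and onto: "f ` carrier M = carrier N"
    and I: "I \<subseteq> carrier R"
  shows "f ` ideal_mod_prod I R M = ideal_mod_prod I R N"
proof
  interpret N: module R N by (rule N)
  have f_smult: "f (r \<odot>\<^bsub>M\<^esub> x) = r \<odot>\<^bsub>N\<^esub> f x" if "r \<in> carrier R" "x \<in> carrier M" for r x
    using f that unfolding mod_hom_def by blast
  have "ideal_mod_prod I R M \<subseteq> {x \<in> carrier M. f x \<in> ideal_mod_prod I R N}"
  proof (intro ideal_mod_prod_least submodule_vimage[OF N f] N.submodule_ideal_mod_prod[OF I])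
    fix r x assume "r \<in> I" "x \<in> carrier M"
    moreover have "r \<in> carrier R" using I \<open>r \<in> I\<close> by blast
    ultimately show "r \<odot>\<^bsub>M\<^esub> x \<in> {x \<in> carrier M. f x \<in> ideal_mod_prod I R N}"
      using f by (auto simp: f_smult mod_hom_def intro: N.ideal_mod_prod_smult_mem)
  qed
  then show "f ` ideal_mod_prod I R M \<subseteq> ideal_mod_prod I R N" by blast
  show "ideal_mod_prod I R N \<subseteq> f ` ideal_mod_prod I R M"
  proof (rule N.ideal_mod_prod_least)
    show "submodule (f ` ideal_mod_prod I R M) R N"
      by (rule submodule_image[OF N f submodule_ideal_mod_prod[OF I]])
    fix r y assume r: "r \<in> I" and "y \<in> carrier N"
    then obtain x where x: "x \<in> carrier M" "y = f x" using onto by blast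
    have "r \<odot>\<^bsub>N\<^esub> y = f (r \<odot>\<^bsub>M\<^esub> x)" using r x I by (auto simp: f_smult)
    then show "r \<odot>\<^bsub>N\<^esub> y \<in> f ` ideal_mod_prod I R M"
      using ideal_mod_prod_smult_mem[OF r x(1)] by blast
  qed
qed

end

section \<open>Cyclic modules and multiplication modules\<close>

definition cyclic_submodule :: "('r, 'x) ring_scheme \<Rightarrow> ('r, 's, 'u) module_scheme \<Rightarrow> 's \<Rightarrow> 's set" where
  "cyclic_submodule R M m = {r \<odot>\<^bsub>M\<^esub> m | r. r \<in> carrier R}"

definition cyclic_module :: "('r, 'x) ring_scheme \<Rightarrow> ('r, 's, 'u) module_scheme \<Rightarrow> bool" where
  "cyclic_module R M \<longleftrightarrow> (\<exists>m \<in> carrier M. carrier M = cyclic_submodule R M m)"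

context module
begin

lemma ideal_mod_colon:
  assumes N: "submodule N R M"
  shows "ideal (mod_colon R N M) R"
proof (rule idealI)
  show "subgroup (mod_colon R N M) (add_monoid R)"
  proof (rule R.add.subgroupI)
    show "mod_colon R N M \<noteq> {}"
      unfolding mod_colon_def using submodule_zero[OF N] by (auto intro!: exI[of _ \<zero>])
    fix a b assume "a \<in> mod_colon R N M" "b \<in> mod_colon R N M"
    then show "\<ominus> a \<in> mod_colon R N M" "a \<oplus> b \<in> mod_colon R N M"
      using submoduleE(3,5)[OF N] unfolding mod_colon_def by (auto simp: smult_l_minus smult_l_distr)
  qed (auto simp: mod_colon_def)
next
  fix a x assume "a \<in> mod_colon R N M" "x \<in> carrier R"
  then show "x \<otimes> a \<in> mod_colon R N M" "a \<otimes> x \<in> mod_colon R N M"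
    using submoduleE(4)[OF N] unfolding mod_colon_def by (auto simp: smult_assoc1 m_comm)
qed (rule ring_axioms)

lemma mod_colon_proper: "N \<subseteq> carrier M \<Longrightarrow> N \<noteq> carrier M \<Longrightarrow> mod_colon R N M \<noteq> carrier R"
  unfolding mod_colon_def by (metis (no_types, lifting) mem_Collect_eq one_closed smult_one subsetI subset_antisym)

lemma submodule_smult_ideal:
  assumes I: "ideal I R" and m: "m \<in> carrier M"
  shows "submodule {r \<odot>\<^bsub>M\<^esub> m | r. r \<in> I} R M"
proof -
  interpret I: ideal I R by (rule I)
  show ?thesis
  proof (rule submoduleI)
    show "\<zero>\<^bsub>M\<^esub> \<in> {r \<odot>\<^bsub>M\<^esub> m | r. r \<in> I}" using m by (auto intro!: exI[of _ \<zero>])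
    fix a b assume "a \<in> {r \<odot>\<^bsub>M\<^esub> m | r. r \<in> I}" "b \<in> {r \<odot>\<^bsub>M\<^esub> m | r. r \<in> I}"
    then obtain r s where "r \<in> I" "a = r \<odot>\<^bsub>M\<^esub> m" "s \<in> I" "b = s \<odot>\<^bsub>M\<^esub> m" by blast
    then show "\<ominus>\<^bsub>M\<^esub> a \<in> {r \<odot>\<^bsub>M\<^esub> m | r. r \<in> I}"
      using m by (auto intro!: exI[of _ "\<ominus> r"] simp: smult_l_minus)
    show "a \<oplus>\<^bsub>M\<^esub> b \<in> {r \<odot>\<^bsub>M\<^esub> m | r. r \<in> I}"
      using \<open>r \<in> I\<close> \<open>s \<in> I\<close> \<open>a = _\<close> \<open>b = _\<close> m
      by (auto intro!: exI[of _ "r \<oplus> s"] simp: smult_l_distr)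
  next
    fix a x assume a: "a \<in> carrier R" and "x \<in> {r \<odot>\<^bsub>M\<^esub> m | r. r \<in> I}"
    then obtain r where "r \<in> I" "x = r \<odot>\<^bsub>M\<^esub> m" by blast
    then show "a \<odot>\<^bsub>M\<^esub> x \<in> {r \<odot>\<^bsub>M\<^esub> m | r. r \<in> I}"
      using a m by (auto intro!: exI[of _ "a \<otimes> r"] simp: smult_assoc1 I.I_l_closed)
  qed (use m in auto)
qed

lemma submodule_cyclic_submodule: "m \<in> carrier M \<Longrightarrow> submodule (cyclic_submodule R M m) R M"
  unfolding cyclic_submodule_def by (rule submodule_smult_ideal[OF R.oneideal])

lemma cyclic_submodule_self: "m \<in> carrier M \<Longrightarrow> m \<in> cyclic_submodule R M m"
  unfolding cyclic_submodule_def by (auto intro!: exI[of _ \<one>])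

lemma submodule_smult_colon:
  assumes N: "submodule N R M" and J: "J \<subseteq> carrier R"
  shows "submodule {y \<in> carrier M. \<forall>k \<in> J. k \<odot>\<^bsub>M\<^esub> y \<in> N} R M"
proof (rule submoduleI)
  fix r a assume "r \<in> carrier R" "a \<in> {y \<in> carrier M. \<forall>k \<in> J. k \<odot>\<^bsub>M\<^esub> y \<in> N}"
  moreover have "k \<odot>\<^bsub>M\<^esub> (r \<odot>\<^bsub>M\<^esub> a) = r \<odot>\<^bsub>M\<^esub> (k \<odot>\<^bsub>M\<^esub> a)" if "k \<in> J" "r \<in> carrier R" "a \<in> carrier M" for k
    using that J by (auto simp: smult_assoc1[symmetric] m_comm)
  ultimately show "r \<odot>\<^bsub>M\<^esub> a \<in> {y \<in> carrier M. \<forall>k \<in> J. k \<odot>\<^bsub>M\<^esub> y \<in> N}"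
    using submoduleE(4)[OF N] by auto
qed (use J submodule_zero[OF N] submoduleE(3,5)[OF N] in \<open>auto simp: smult_r_minus smult_r_distr\<close>)

lemma cyclic_module_submodule_eq_colon:
  assumes cyc: "cyclic_module R M" and N: "submodule N R M"
  shows "N = ideal_mod_prod (mod_colon R N M) R M"
proof
  obtain m where m: "m \<in> carrier M" and M_eq: "carrier M = cyclic_submodule R M m"
    using cyc unfolding cyclic_module_def by blast
  show "N \<subseteq> ideal_mod_prod (mod_colon R N M) R M"
  proof
    fix n assume n: "n \<in> N"
    then obtain r where r: "r \<in> carrier R" "n = r \<odot>\<^bsub>M\<^esub> m"
      using M_eq submoduleE(1)[OF N] unfolding cyclic_submodule_def by blast
    have "r \<in> mod_colon R N M" unfolding mod_colon_def
    proof (intro CollectI conjI ballI r(1))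
      fix x assume "x \<in> carrier M"
      then obtain t where t: "t \<in> carrier R" "x = t \<odot>\<^bsub>M\<^esub> m"
        using M_eq unfolding cyclic_submodule_def by blast
      then have "r \<odot>\<^bsub>M\<^esub> x = t \<odot>\<^bsub>M\<^esub> n" using r m by (simp add: smult_assoc1[symmetric] m_comm)
      then show "r \<odot>\<^bsub>M\<^esub> x \<in> N" using submoduleE(4)[OF N t(1) n] by simp
    qed
    then show "n \<in> ideal_mod_prod (mod_colon R N M) R M" using r m ideal_mod_prod_smult_mem by simp
  qed
  show "ideal_mod_prod (mod_colon R N M) R M \<subseteq> N"
    by (rule ideal_mod_prod_least[OF N]) (auto simp: mod_colon_def)
qed

lemma cyclic_imp_pap_multiplication_module:
  "cyclic_module R M \<Longrightarrow> pap_multiplication_module R M"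
  unfolding pap_multiplication_module_def pseudo_absorbing_primary_def
  using cyclic_module_submodule_eq_colon ideal_mod_colon by blast

lemma mod_colon_vimage:
  assumes f: "mod_hom R M N f" and onto: "f ` carrier M = carrier N"
  shows "mod_colon R {x \<in> carrier M. f x \<in> W} M = mod_colon R W N"
proof -
  have f_smult: "f (r \<odot>\<^bsub>M\<^esub> x) = r \<odot>\<^bsub>N\<^esub> f x" if "r \<in> carrier R" "x \<in> carrier M" for r x
    using f that unfolding mod_hom_def by blast
  have "(\<forall>x\<in>carrier M. r \<odot>\<^bsub>M\<^esub> x \<in> carrier M \<and> f (r \<odot>\<^bsub>M\<^esub> x) \<in> W) \<longleftrightarrow> (\<forall>y\<in>carrier N. r \<odot>\<^bsub>N\<^esub> y \<in> W)"
    if "r \<in> carrier R" for r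
    using that by (auto simp: f_smult simp flip: onto)
  then show ?thesis unfolding mod_colon_def by auto
qed

lemma pap_multiplication_module_image:
  assumes N: "module R N" and f: "mod_hom R M N f" and onto: "f ` carrier M = carrier N"
    and pap: "pap_multiplication_module R M"
  shows "pap_multiplication_module R N"
  unfolding pap_multiplication_module_def
proof (intro allI impI)
  interpret N: module R N by (rule N)
  fix W assume "pseudo_absorbing_primary R N W"
  then have W: "submodule W R N" and W_proper: "W \<noteq> carrier N"
    and W_colon: "two_absorbing_primary R (mod_colon R W N)"
    unfolding pseudo_absorbing_primary_def by blast+
  have W_carrier: "W \<subseteq> carrier N" using N.submoduleE(1)[OF W] .
  define W' where "W' = {x \<in> carrier M. f x \<in> W}"
  have W'_image: "f ` W' = W"
  proof
    show "W \<subseteq> f ` W'"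
    proof
      fix w assume "w \<in> W"
      then obtain x where "x \<in> carrier M" "w = f x" using onto W_carrier by blast
      then show "w \<in> f ` W'" using \<open>w \<in> W\<close> unfolding W'_def by blast
    qed
  qed (auto simp: W'_def)
  have "pseudo_absorbing_primary R M W'"
    unfolding pseudo_absorbing_primary_def W'_def mod_colon_vimage[OF f onto]
    using submodule_vimage[OF N f W] W_proper W_colon W'_image W'_def onto by auto
  then obtain I where I: "ideal I R" "W' = ideal_mod_prod I R M"
    using pap unfolding pap_multiplication_module_def by blast
  have "W = ideal_mod_prod I R N"
    using W'_image ideal_mod_prod_image[OF N f onto] I ideal.Icarr by (metis subsetI)
  then show "\<exists>I. ideal I R \<and> W = ideal_mod_prod I R N" using I(1) by blast
qed

end

section \<open>Quotient modules and minimality of separated representations\<close>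

text \<open>The quotient \<open>M / L\<close> is modelled on a set of coset representatives inside \<open>M\<close>, so that it
  has the same carrier type as \<open>M\<close>: the minimality clause of \<^const>\<open>sep_rep\<close> only quantifies
  over modules of that type.\<close>

locale submodule_quotient = module +
  fixes L
  assumes L_submodule: "submodule L R M"
begin

sublocale L: abelian_subgroup L M
  by (rule abelian_subgroupI2[OF a_comm_group submodule.axioms(1)[OF L_submodule]])

definition coset_rep :: "'c \<Rightarrow> 'c" where
  "coset_rep x = (SOME y. y \<in> L +>\<^bsub>M\<^esub> x)"

definition quotient :: "('a, 'c, 'd) module_scheme" where
  "quotient = M\<lparr>carrier := coset_rep ` carrier M, zero := coset_rep \<zero>\<^bsub>M\<^esub>,
     add := \<lambda>x y. coset_rep (x \<oplus>\<^bsub>M\<^esub> y), smult := \<lambda>r x. coset_rep (r \<odot>\<^bsub>M\<^esub> x)\<rparr>"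

lemma coset_rep_in_coset: "x \<in> carrier M \<Longrightarrow> coset_rep x \<in> L +>\<^bsub>M\<^esub> x"
  unfolding coset_rep_def by (metis someI L.a_rcos_self)

lemma coset_rep_closed [simp]: "x \<in> carrier M \<Longrightarrow> coset_rep x \<in> carrier M"
  using coset_rep_in_coset L.a_elemrcos_carrier by blast

lemma coset_rep_minus_mem: "x \<in> carrier M \<Longrightarrow> coset_rep x \<ominus>\<^bsub>M\<^esub> x \<in> L"
  using L.a_rcos_module_imp[OF _ coset_rep_in_coset] by (simp add: a_minus_def)

lemma coset_rep_eq_iff:
  assumes x: "x \<in> carrier M" and y: "y \<in> carrier M"
  shows "coset_rep x = coset_rep y \<longleftrightarrow> x \<ominus>\<^bsub>M\<^esub> y \<in> L"
proof
  assume "coset_rep x = coset_rep y"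
  then have "L +>\<^bsub>M\<^esub> x = L +>\<^bsub>M\<^esub> y"
    using L.a_repr_independence'[OF coset_rep_in_coset] x y by metis
  then show "x \<ominus>\<^bsub>M\<^esub> y \<in> L"
    using L.a_rcos_module_imp[OF y] L.a_rcos_self[OF x] by (simp add: a_minus_def)
next
  assume "x \<ominus>\<^bsub>M\<^esub> y \<in> L"
  then have "L +>\<^bsub>M\<^esub> y = L +>\<^bsub>M\<^esub> x"
    using L.a_repr_independence'[OF L.a_rcos_module_rev[OF y x]] y by (simp add: a_minus_def)
  then show "coset_rep x = coset_rep y" unfolding coset_rep_def by simp
qed

lemma coset_rep_add:
  assumes "x \<in> carrier M" "y \<in> carrier M"
  shows "coset_rep (coset_rep x \<oplus>\<^bsub>M\<^esub> coset_rep y) = coset_rep (x \<oplus>\<^bsub>M\<^esub> y)"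
proof -
  have "(coset_rep x \<oplus>\<^bsub>M\<^esub> coset_rep y) \<ominus>\<^bsub>M\<^esub> (x \<oplus>\<^bsub>M\<^esub> y)
      = (coset_rep x \<ominus>\<^bsub>M\<^esub> x) \<oplus>\<^bsub>M\<^esub> (coset_rep y \<ominus>\<^bsub>M\<^esub> y)"
    using assms by (simp add: a_minus_def M.minus_add M.a_ac)
  then show ?thesis
    using assms coset_rep_minus_mem submoduleE(5)[OF L_submodule] by (simp add: coset_rep_eq_iff)
qed

lemma coset_rep_smult:
  assumes "r \<in> carrier R" "x \<in> carrier M"
  shows "coset_rep (r \<odot>\<^bsub>M\<^esub> coset_rep x) = coset_rep (r \<odot>\<^bsub>M\<^esub> x)"
proof -
  have "(r \<odot>\<^bsub>M\<^esub> coset_rep x) \<ominus>\<^bsub>M\<^esub> (r \<odot>\<^bsub>M\<^esub> x) = r \<odot>\<^bsub>M\<^esub> (coset_rep x \<ominus>\<^bsub>M\<^esub> x)"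
    using assms by (simp add: a_minus_def smult_r_distr smult_r_minus)
  then show ?thesis
    using assms coset_rep_minus_mem submoduleE(4)[OF L_submodule] by (simp add: coset_rep_eq_iff)
qed

lemma coset_rep_eq_zero_iff: "x \<in> carrier M \<Longrightarrow> coset_rep x = coset_rep \<zero>\<^bsub>M\<^esub> \<longleftrightarrow> x \<in> L"
  using coset_rep_eq_iff[of x "\<zero>\<^bsub>M\<^esub>"] by (simp add: minus_zero_right)

lemma carrier_quotient: "carrier quotient = coset_rep ` carrier M"
  unfolding quotient_def by simp

lemma zero_quotient: "\<zero>\<^bsub>quotient\<^esub> = coset_rep \<zero>\<^bsub>M\<^esub>"
  unfolding quotient_def by simp

lemma add_quotient [simp]:
  "x \<in> carrier M \<Longrightarrow> y \<in> carrier M \<Longrightarrow> coset_rep x \<oplus>\<^bsub>quotient\<^esub> coset_rep y = coset_rep (x \<oplus>\<^bsub>M\<^esub> y)"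
  unfolding quotient_def by (simp add: coset_rep_add)

lemma smult_quotient [simp]:
  "r \<in> carrier R \<Longrightarrow> x \<in> carrier M \<Longrightarrow> r \<odot>\<^bsub>quotient\<^esub> coset_rep x = coset_rep (r \<odot>\<^bsub>M\<^esub> x)"
  unfolding quotient_def by (simp add: coset_rep_smult)

lemma quotient_abelian_group: "abelian_group quotient"
proof (rule abelian_groupI)
  fix x y z assume "x \<in> carrier quotient" "y \<in> carrier quotient" "z \<in> carrier quotient"
  then obtain a b c where abc: "a \<in> carrier M" "b \<in> carrier M" "c \<in> carrier M"
    and xyz: "x = coset_rep a" "y = coset_rep b" "z = coset_rep c"
    by (auto simp: carrier_quotient)
  show "x \<oplus>\<^bsub>quotient\<^esub> y \<in> carrier quotient" using abc xyz by (simp add: carrier_quotient)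
  show "x \<oplus>\<^bsub>quotient\<^esub> y \<oplus>\<^bsub>quotient\<^esub> z = x \<oplus>\<^bsub>quotient\<^esub> (y \<oplus>\<^bsub>quotient\<^esub> z)"
    using abc xyz by (simp add: M.add.m_assoc)
  show "x \<oplus>\<^bsub>quotient\<^esub> y = y \<oplus>\<^bsub>quotient\<^esub> x"
    using abc xyz by (simp add: M.add.m_comm)
  show "\<zero>\<^bsub>quotient\<^esub> \<oplus>\<^bsub>quotient\<^esub> x = x"
    using abc xyz by (simp add: zero_quotient)
  have "coset_rep (\<ominus>\<^bsub>M\<^esub> a) \<oplus>\<^bsub>quotient\<^esub> x = \<zero>\<^bsub>quotient\<^esub>"
    using abc xyz by (simp add: zero_quotient M.l_neg)
  then show "\<exists>y\<in>carrier quotient. y \<oplus>\<^bsub>quotient\<^esub> x = \<zero>\<^bsub>quotient\<^esub>"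
    using abc by (auto simp: carrier_quotient)
qed (simp add: carrier_quotient zero_quotient)

lemma quotient_module: "module R quotient"
proof (rule moduleI)
  show "cring R" by (rule is_cring)
  show "abelian_group quotient" by (rule quotient_abelian_group)
  show "\<one> \<odot>\<^bsub>quotient\<^esub> x = x" if "x \<in> carrier quotient" for x
    using that by (auto simp: carrier_quotient)
  fix a b x y assume ab: "a \<in> carrier R" "b \<in> carrier R"
    and "x \<in> carrier quotient" "y \<in> carrier quotient"
  then obtain u v where uv: "u \<in> carrier M" "v \<in> carrier M" "x = coset_rep u" "y = coset_rep v"
    by (auto simp: carrier_quotient)
  show "a \<odot>\<^bsub>quotient\<^esub> x \<in> carrier quotient" using ab uv by (simp add: carrier_quotient)
  show "(a \<oplus> b) \<odot>\<^bsub>quotient\<^esub> x = a \<odot>\<^bsub>quotient\<^esub> x \<oplus>\<^bsub>quotient\<^esub> b \<odot>\<^bsub>quotient\<^esub> x"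
    using ab uv by (simp add: smult_l_distr)
  show "a \<odot>\<^bsub>quotient\<^esub> (x \<oplus>\<^bsub>quotient\<^esub> y) = a \<odot>\<^bsub>quotient\<^esub> x \<oplus>\<^bsub>quotient\<^esub> a \<odot>\<^bsub>quotient\<^esub> y"
    using ab uv by (simp add: smult_r_distr)
  show "(a \<otimes> b) \<odot>\<^bsub>quotient\<^esub> x = a \<odot>\<^bsub>quotient\<^esub> (b \<odot>\<^bsub>quotient\<^esub> x)"
    using ab uv by (simp add: smult_assoc1)
qed

lemma coset_rep_mod_hom: "mod_hom R M quotient coset_rep"
  unfolding mod_hom_def quotient_def by (auto simp: coset_rep_add coset_rep_smult)

lemma ideal_mod_prod_quotient:
  "I \<subseteq> carrier R \<Longrightarrow> ideal_mod_prod I R quotient = coset_rep ` ideal_mod_prod I R M"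
  using ideal_mod_prod_image[OF quotient_module coset_rep_mod_hom] by (simp add: carrier_quotient)

lemma mod_hom_coset_rep:
  assumes N: "module R N" and f: "mod_hom R M N f" and L_ker: "\<And>l. l \<in> L \<Longrightarrow> f l = \<zero>\<^bsub>N\<^esub>"
    and x: "x \<in> carrier M"
  shows "f (coset_rep x) = f x"
proof -
  interpret N: module R N by (rule N)
  have "f (coset_rep x) \<ominus>\<^bsub>N\<^esub> f x = \<zero>\<^bsub>N\<^esub>"
    using L_ker[OF coset_rep_minus_mem[OF x]] mod_hom_minus[OF N f] x by simp
  then show ?thesis
    using N.minus_eq_zero_imp_eq f x unfolding mod_hom_def by (simp add: Pi_iff)
qed

lemma mod_hom_quotient:
  assumes N: "module R N" and f: "mod_hom R M N f" and L_ker: "\<And>l. l \<in> L \<Longrightarrow> f l = \<zero>\<^bsub>N\<^esub>"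
  shows "mod_hom R quotient N f"
  using f mod_hom_coset_rep[OF N f L_ker] unfolding mod_hom_def quotient_def
  by (auto simp: coset_rep_add coset_rep_smult)

end

text \<open>If \<open>L \<subseteq> K\<close> is such that \<open>S / L\<close> is again separated, then \<open>\<phi>\<close> factors through \<open>S / L\<close>, and
  minimality of the separated representation forces \<open>S \<rightarrow> S / L\<close> to be injective.\<close>

lemma sep_rep_trivial_submodule:
  fixes R :: "('a \<times> 'b) ring" and S :: "('a \<times> 'b, 's) module" and M :: "('a \<times> 'b, 't) module"
    and R1 :: "('a, 'm) ring_scheme" and R2 :: "('b, 'n) ring_scheme"
  assumes rep: "sep_rep R R1 R2 P1 P2 S M \<phi>" and M: "module R M"
    and I1: "{(a, \<zero>\<^bsub>R2\<^esub>) | a. a \<in> P1} \<subseteq> carrier R"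
    and I2: "{(\<zero>\<^bsub>R1\<^esub>, b) | b. b \<in> P2} \<subseteq> carrier R"
    and L: "submodule L R S" and L_ker: "\<And>l. l \<in> L \<Longrightarrow> \<phi> l = \<zero>\<^bsub>M\<^esub>"
    and L_sep: "\<And>a1 a2. a1 \<in> ideal_mod_prod {(a, \<zero>\<^bsub>R2\<^esub>) | a. a \<in> P1} R S \<Longrightarrow>
       a2 \<in> ideal_mod_prod {(\<zero>\<^bsub>R1\<^esub>, b) | b. b \<in> P2} R S \<Longrightarrow> a1 \<ominus>\<^bsub>S\<^esub> a2 \<in> L \<Longrightarrow> a1 \<in> L"
  shows "L = {\<zero>\<^bsub>S\<^esub>}"
proof -
  let ?I1 = "{(a, \<zero>\<^bsub>R2\<^esub>) | a. a \<in> P1}" and ?I2 = "{(\<zero>\<^bsub>R1\<^esub>, b) | b. b \<in> P2}"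
  have S: "module R S" and \<phi>: "mod_hom R S M \<phi>" using rep unfolding sep_rep_def by blast+
  interpret S: submodule_quotient R S L by (intro submodule_quotient.intro S submodule_quotient_axioms.intro L)
  interpret Q: module R S.quotient by (rule S.quotient_module)
  have "separated R R1 R2 P1 P2 S.quotient"
    unfolding separated_def
  proof
    show "ideal_mod_prod ?I1 R S.quotient \<inter> ideal_mod_prod ?I2 R S.quotient \<subseteq> {\<zero>\<^bsub>S.quotient\<^esub>}"
    proof
      fix y assume y: "y \<in> ideal_mod_prod ?I1 R S.quotient \<inter> ideal_mod_prod ?I2 R S.quotient"
      obtain a1 a2 where a1: "a1 \<in> ideal_mod_prod ?I1 R S" "y = S.coset_rep a1"
        and a2: "a2 \<in> ideal_mod_prod ?I2 R S" "y = S.coset_rep a2"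
        using y unfolding S.ideal_mod_prod_quotient[OF I1] S.ideal_mod_prod_quotient[OF I2] by blast
      have "a1 \<in> carrier S" "a2 \<in> carrier S"
        using a1(1) a2(1) S.submoduleE(1)[OF S.submodule_ideal_mod_prod[OF I1]]
          S.submoduleE(1)[OF S.submodule_ideal_mod_prod[OF I2]] by blast+
      moreover have "S.coset_rep a1 = S.coset_rep a2" using a1(2) a2(2) by simp
      ultimately have "a1 \<ominus>\<^bsub>S\<^esub> a2 \<in> L" using S.coset_rep_eq_iff by blast
      then have "a1 \<in> L" using L_sep a1(1) a2(1) by blast
      then show "y \<in> {\<zero>\<^bsub>S.quotient\<^esub>}"
        using S.coset_rep_eq_zero_iff \<open>a1 \<in> carrier S\<close> a1(2) by (simp add: S.zero_quotient)
    qed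
    show "{\<zero>\<^bsub>S.quotient\<^esub>} \<subseteq> ideal_mod_prod ?I1 R S.quotient \<inter> ideal_mod_prod ?I2 R S.quotient"
      using Q.submodule_zero[OF Q.submodule_ideal_mod_prod] I1 I2 by blast
  qed
  moreover have "\<forall>s\<in>carrier S. \<phi> (S.coset_rep s) = \<phi> s"
    using S.mod_hom_coset_rep[OF M \<phi> L_ker] by blast
  ultimately have "inj_on S.coset_rep (carrier S)"
    using rep S.quotient_module S.coset_rep_mod_hom S.mod_hom_quotient[OF M \<phi> L_ker]
    unfolding sep_rep_def by (elim conjE allE[of _ S.quotient] allE[of _ S.coset_rep] allE[of _ \<phi>]) blast
  moreover have "S.coset_rep l = S.coset_rep \<zero>\<^bsub>S\<^esub>" "l \<in> carrier S" if "l \<in> L" for l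
    using S.coset_rep_eq_zero_iff that S.submoduleE(1)[OF L] by blast+
  ultimately show ?thesis
    using S.submodule_zero[OF L] by (blast dest: inj_onD)
qed

section \<open>Discrete valuation rings\<close>

lemma dvr_principal_domain: "dvr R P \<Longrightarrow> principal_domain R"
  unfolding dvr_def by blast

lemma dvr_not_in_ideal_imp_unit:
  fixes R (structure)
  assumes dvr: "dvr R P" and x: "x \<in> carrier R" and x_notin: "x \<notin> P"
  shows "x \<in> Units R"
proof (rule ccontr)
  assume not_unit: "x \<notin> Units R"
  interpret principal_domain R by (rule dvr_principal_domain[OF dvr])
  have P_max: "maximalideal P R" and P_unique: "\<And>I. maximalideal I R \<Longrightarrow> I = P"
    using dvr unfolding dvr_def by auto
  have "x \<noteq> \<zero>" using x_notin additive_subgroup.zero_closed[OF ideal.axioms(1)[OF maximalideal.axioms(1)[OF P_max]]]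
    by auto
  then obtain b where b: "b \<in> carrier R" "ring_irreducible b" "b divides x"
    using exists_irreducible_divisor[of x] x not_unit by blast
  have "PIdl b = P" using P_unique irreducible_imp_maximalideal b(1,2) by blast
  moreover have "x \<in> PIdl b"
    using b(1,3) unfolding factor_def cgenideal_def by (auto simp: m_comm)
  ultimately show False using x_notin by simp
qed

lemma dvr_eq_unit_times_power:
  fixes R (structure)
  assumes dvr: "dvr R P" and P: "P = PIdl p" and p: "p \<in> carrier R"
  shows "z \<in> carrier R \<Longrightarrow> z \<noteq> \<zero> \<Longrightarrow> \<exists>k u. u \<in> Units R \<and> z = p [^] (k::nat) \<otimes> u"
proof -
  interpret principal_domain R by (rule dvr_principal_domain[OF dvr])
  have P_max: "maximalideal P R" and "P \<noteq> {\<zero>}" using dvr unfolding dvr_def by auto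
  then have p_nonzero: "p \<noteq> \<zero>" using P p unfolding cgenideal_def by force
  have p_not_unit: "p \<notin> Units R"
  proof
    assume "p \<in> Units R"
    then have "\<one> \<in> P" unfolding P cgenideal_def using p by (auto intro!: exI[of _ "inv p"])
    then show False using P_max by (metis ideal.one_imp_carrier maximalideal.axioms(1) maximalideal.I_notcarr)
  qed
  let ?r = "{(x, y). x \<in> carrier (mult_of R) \<and> y \<in> carrier (mult_of R) \<and> properfactor (mult_of R) x y}"
  have "z \<in> carrier R \<longrightarrow> z \<noteq> \<zero> \<longrightarrow> (\<exists>k u. u \<in> Units R \<and> z = p [^] (k::nat) \<otimes> u)" for z
    using mult_of.division_wellfounded
  proof (induction z rule: wf_induct_rule)
    case (less z)
    show ?case
    proof (intro impI)
      assume z: "z \<in> carrier R" "z \<noteq> \<zero>"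
      show "\<exists>k u. u \<in> Units R \<and> z = p [^] (k::nat) \<otimes> u"
      proof (cases "z \<in> Units R")
        case True
        then show ?thesis by (intro exI[of _ 0] exI[of _ z]) (simp add: z)
      next
        case False
        then have "z \<in> P" using dvr_not_in_ideal_imp_unit[OF dvr z(1)] by blast
        then obtain c where c: "c \<in> carrier R" "z = c \<otimes> p" unfolding P cgenideal_def by blast
        have "c \<noteq> \<zero>" using c z p by auto
        moreover have "properfactor (mult_of R) c z"
          using mult_of.properfactorI3[of z c p] c \<open>c \<noteq> \<zero>\<close> p p_nonzero p_not_unit by simp
        ultimately obtain k u where u: "u \<in> Units R" "c = p [^] (k::nat) \<otimes> u"
          using less.IH[of c] c(1) z by auto
        have "z = p [^] (Suc k) \<otimes> u" using c u p Units_closed[OF u(1)] by (simp add: m_ac)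
        then show ?thesis using u(1) by blast
      qed
    qed
  qed
  then show "z \<in> carrier R \<Longrightarrow> z \<noteq> \<zero> \<Longrightarrow> \<exists>k u. u \<in> Units R \<and> z = p [^] (k::nat) \<otimes> u" by blast
qed

lemma dvr_pow_eventually_multiple:
  fixes R (structure)
  assumes dvr: "dvr R P" and P: "P = PIdl p" and p: "p \<in> carrier R"
    and z: "z \<in> carrier R" and y: "y \<in> P" and z_zero: "z = \<zero> \<Longrightarrow> y = \<zero>"
  shows "\<exists>n. \<forall>m\<ge>n. \<exists>w\<in>P. y [^] (m::nat) = z \<otimes> w"
proof -
  interpret principal_domain R by (rule dvr_principal_domain[OF dvr])
  have zero_in_P: "\<zero> \<in> P" using P p unfolding cgenideal_def by (auto intro!: exI[of _ \<zero>])
  show ?thesis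
  proof (cases "z = \<zero>")
    case True
    then have "y = \<zero>" by (rule z_zero)
    then have "\<forall>m\<ge>1. y [^] (m::nat) = z \<otimes> \<zero>" using True by (simp add: nat_pow_zero)
    then show ?thesis using zero_in_P by blast
  next
    case False
    obtain k u where u: "u \<in> Units R" "z = p [^] (k::nat) \<otimes> u"
      using dvr_eq_unit_times_power[OF dvr P p z False] by blast
    obtain y' where y': "y' \<in> carrier R" "y = y' \<otimes> p" using y unfolding P cgenideal_def by blast
    have u_closed: "u \<in> carrier R" "inv u \<in> carrier R" using u by auto
    have "y [^] m = z \<otimes> (inv u \<otimes> (y' [^] m \<otimes> (p [^] j \<otimes> p)))" if m: "m = k + Suc j" for m j
    proof -
      have "y [^] m = y' [^] m \<otimes> p [^] m" using y' p by (simp add: nat_pow_distrib)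
      also have "p [^] m = p [^] k \<otimes> (p [^] j \<otimes> p)" using p m by (simp add: nat_pow_mult[symmetric] m_assoc)
      also have "y' [^] m \<otimes> (p [^] k \<otimes> (p [^] j \<otimes> p))
          = p [^] k \<otimes> (u \<otimes> inv u) \<otimes> (y' [^] m \<otimes> (p [^] j \<otimes> p))"
        using u y' p by (simp add: Units_r_inv m_ac)
      also have "\<dots> = z \<otimes> (inv u \<otimes> (y' [^] m \<otimes> (p [^] j \<otimes> p)))"
        using u(2) u_closed y' p by (simp add: m_ac)
      finally show ?thesis .
    qed
    moreover have "inv u \<otimes> (y' [^] m \<otimes> (p [^] j \<otimes> p)) \<in> P" for m j :: nat
      unfolding P cgenideal_def using u_closed y' p
      by (auto intro!: exI[of _ "inv u \<otimes> (y' [^] m \<otimes> p [^] j)"] simp: m_ac)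
    ultimately have "\<forall>m\<ge>Suc k. \<exists>w\<in>P. y [^] m = z \<otimes> w"
      by (metis le_iff_add add_Suc_right add_Suc)
    then show ?thesis by blast
  qed
qed

section \<open>The pullback ring\<close>

lemma (in ring) ideal_subset_rad: "ideal J R \<Longrightarrow> J \<subseteq> rad R J"
  unfolding rad_def using ideal.Icarr by (fastforce intro: exI[of _ "1::nat"])

lemma (in cring) ideal_triple_product_unit:
  assumes J: "ideal J R" and abc: "a \<in> carrier R" "b \<in> carrier R" "c \<in> carrier R"
    and prod: "a \<otimes> b \<otimes> c \<in> J" and unit: "a \<in> Units R \<or> b \<in> Units R \<or> c \<in> Units R"
  shows "a \<otimes> b \<in> J \<or> a \<otimes> c \<in> J \<or> b \<otimes> c \<in> J"
proof -
  have "b \<otimes> c = inv a \<otimes> (a \<otimes> b \<otimes> c)" if "a \<in> Units R"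
    using that abc by (simp add: m_assoc[symmetric] Units_l_inv)
  moreover have "a \<otimes> c = (a \<otimes> b \<otimes> c) \<otimes> inv b" if "b \<in> Units R"
  proof -
    have "(a \<otimes> b \<otimes> c) \<otimes> inv b = a \<otimes> c \<otimes> (b \<otimes> inv b)"
      using that abc by (simp add: m_ac del: Units_r_inv Units_l_inv)
    then show ?thesis using that abc by simp
  qed
  moreover have "a \<otimes> b = (a \<otimes> b \<otimes> c) \<otimes> inv c" if "c \<in> Units R"
    using that abc by (simp add: m_assoc Units_r_inv)
  ultimately show ?thesis
    using unit prod ideal.I_l_closed[OF J] ideal.I_r_closed[OF J] by (metis Units_inv_closed)
qed

locale dvr_pullback =
  fixes R1 :: "'a ring" and R2 :: "'b ring" and Rbar :: "'c ring"
    and V1 :: "'a \<Rightarrow> 'c" and V2 :: "'b \<Rightarrow> 'c" and p1 :: 'a and p2 :: 'b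
    and P1 P2 and R :: "('a \<times> 'b) ring"
  assumes P1_def: "P1 = PIdl\<^bsub>R1\<^esub> p1" and P2_def: "P2 = PIdl\<^bsub>R2\<^esub> p2"
    and R_def: "R = pullback_ring R1 R2 V1 V2"
    and p1: "p1 \<in> carrier R1" and p2: "p2 \<in> carrier R2"
    and dvr1: "dvr R1 P1" and dvr2: "dvr R2 P2"
    and field: "field Rbar"
    and V1: "V1 \<in> ring_hom R1 Rbar" and V1_ker: "a_kernel R1 Rbar V1 = P1"
    and V2: "V2 \<in> ring_hom R2 Rbar" and V2_ker: "a_kernel R2 Rbar V2 = P2"
    and cring_R: "cring R"
begin

sublocale R1: principal_domain R1 by (rule dvr_principal_domain[OF dvr1])
sublocale R2: principal_domain R2 by (rule dvr_principal_domain[OF dvr2])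
sublocale Rbar: field Rbar by (rule field)
sublocale R: cring R by (rule cring_R)

lemma carrier_R: "carrier R = {(r1, r2). r1 \<in> carrier R1 \<and> r2 \<in> carrier R2 \<and> V1 r1 = V2 r2}"
  unfolding R_def pullback_ring_def by simp

lemma mult_R: "(a, b) \<otimes>\<^bsub>R\<^esub> (c, d) = (a \<otimes>\<^bsub>R1\<^esub> c, b \<otimes>\<^bsub>R2\<^esub> d)"
  unfolding R_def pullback_ring_def RDirProd_def DirProd_def by (simp add: monoid.defs)

lemma add_R: "(a, b) \<oplus>\<^bsub>R\<^esub> (c, d) = (a \<oplus>\<^bsub>R1\<^esub> c, b \<oplus>\<^bsub>R2\<^esub> d)"
  unfolding R_def pullback_ring_def RDirProd_def DirProd_def by (simp add: monoid.defs)

lemma zero_R: "\<zero>\<^bsub>R\<^esub> = (\<zero>\<^bsub>R1\<^esub>, \<zero>\<^bsub>R2\<^esub>)"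
  unfolding R_def pullback_ring_def RDirProd_def DirProd_def by (simp add: monoid.defs)

lemma one_R: "\<one>\<^bsub>R\<^esub> = (\<one>\<^bsub>R1\<^esub>, \<one>\<^bsub>R2\<^esub>)"
  unfolding R_def pullback_ring_def RDirProd_def DirProd_def by (simp add: monoid.defs)

lemma pow_R: "(a, b) [^]\<^bsub>R\<^esub> (n::nat) = (a [^]\<^bsub>R1\<^esub> n, b [^]\<^bsub>R2\<^esub> n)"
  by (induction n) (simp_all add: one_R mult_R)

lemma in_P1_iff: "x \<in> carrier R1 \<Longrightarrow> x \<in> P1 \<longleftrightarrow> V1 x = \<zero>\<^bsub>Rbar\<^esub>"
  using V1_ker unfolding a_kernel_def' by blast

lemma in_P2_iff: "x \<in> carrier R2 \<Longrightarrow> x \<in> P2 \<longleftrightarrow> V2 x = \<zero>\<^bsub>Rbar\<^esub>"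
  using V2_ker unfolding a_kernel_def' by blast

lemma P1_subset: "P1 \<subseteq> carrier R1"
  using V1_ker unfolding a_kernel_def' by blast

lemma P2_subset: "P2 \<subseteq> carrier R2"
  using V2_ker unfolding a_kernel_def' by blast

lemma ideal_P1: "ideal P1 R1"
  using dvr1 unfolding dvr_def by (simp add: maximalideal.axioms(1))

lemma zero_in_P1: "\<zero>\<^bsub>R1\<^esub> \<in> P1"
  using in_P1_iff ring_hom_zero[OF V1 R1.ring_axioms Rbar.ring_axioms] by simp

lemma zero_in_P2: "\<zero>\<^bsub>R2\<^esub> \<in> P2"
  using in_P2_iff ring_hom_zero[OF V2 R2.ring_axioms Rbar.ring_axioms] by simp

lemma one_notin_P1: "\<one>\<^bsub>R1\<^esub> \<notin> P1"
  using ideal.one_imp_carrier[OF ideal_P1] dvr1 unfolding dvr_def by (metis maximalideal.I_notcarr)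

lemma snd_in_P2: "(a, b) \<in> carrier R \<Longrightarrow> a \<in> P1 \<Longrightarrow> b \<in> P2"
  using in_P1_iff in_P2_iff by (auto simp: carrier_R)

text \<open>The ideals \<open>P\<^sub>1 \<oplus> 0\<close> and \<open>0 \<oplus> P\<^sub>2\<close> of \<open>R\<close>, and its maximal ideal \<open>P = P\<^sub>1 \<oplus> P\<^sub>2\<close>; for \<open>P\<close>
  it suffices to constrain the first component, see \<open>snd_in_P2\<close>.\<close>

abbreviation P1_oplus_0 :: "('a \<times> 'b) set" where
  "P1_oplus_0 \<equiv> {(a, \<zero>\<^bsub>R2\<^esub>) | a. a \<in> P1}"

abbreviation zero_oplus_P2 :: "('a \<times> 'b) set" where
  "zero_oplus_P2 \<equiv> {(\<zero>\<^bsub>R1\<^esub>, b) | b. b \<in> P2}"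

definition P :: "('a \<times> 'b) set" where
  "P = {r \<in> carrier R. fst r \<in> P1}"

lemma P1_oplus_0_subset: "P1_oplus_0 \<subseteq> P"
  using in_P1_iff P1_subset zero_in_P2 in_P2_iff by (auto simp: P_def carrier_R)

lemma zero_oplus_P2_subset: "zero_oplus_P2 \<subseteq> P"
  using in_P1_iff in_P2_iff P2_subset zero_in_P1 by (auto simp: P_def carrier_R)

lemma P_subset: "P \<subseteq> carrier R"
  unfolding P_def by blast

lemma P_decomp: "(a, b) \<in> P \<Longrightarrow> (a, b) = (a, \<zero>\<^bsub>R2\<^esub>) \<oplus>\<^bsub>R\<^esub> (\<zero>\<^bsub>R1\<^esub>, b)"
  by (auto simp: add_R carrier_R P_def)

lemma fst_mult_R: "fst (x \<otimes>\<^bsub>R\<^esub> y) = fst x \<otimes>\<^bsub>R1\<^esub> fst y"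
  by (cases x, cases y) (simp add: mult_R)

lemma snd_mult_R: "snd (x \<otimes>\<^bsub>R\<^esub> y) = snd x \<otimes>\<^bsub>R2\<^esub> snd y"
  by (cases x, cases y) (simp add: mult_R)

lemma fst_add_R: "fst (x \<oplus>\<^bsub>R\<^esub> y) = fst x \<oplus>\<^bsub>R1\<^esub> fst y"
  by (cases x, cases y) (simp add: add_R)

lemma fst_carrier_R: "x \<in> carrier R \<Longrightarrow> fst x \<in> carrier R1"
  by (auto simp: carrier_R)

lemma snd_carrier_R: "x \<in> carrier R \<Longrightarrow> snd x \<in> carrier R2"
  by (auto simp: carrier_R)

lemma P_mult_closed: "x \<in> carrier R \<Longrightarrow> a \<in> P \<Longrightarrow> x \<otimes>\<^bsub>R\<^esub> a \<in> P"
  using ideal.I_l_closed[OF ideal_P1] fst_carrier_R by (simp add: P_def fst_mult_R)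

lemma ideal_P: "ideal P R"
proof (rule idealI)
  show "subgroup P (add_monoid R)"
  proof (rule R.add.subgroupI)
    show "P \<noteq> {}" unfolding P_def using zero_in_P1 R.zero_closed by (auto simp: zero_R)
    fix x y assume x: "x \<in> P" and y: "y \<in> P"
    have "\<ominus>\<^bsub>R\<^esub> x = (\<ominus>\<^bsub>R\<^esub> \<one>\<^bsub>R\<^esub>) \<otimes>\<^bsub>R\<^esub> x" using x P_subset by (auto simp: R.l_minus)
    then show "\<ominus>\<^bsub>R\<^esub> x \<in> P" using P_mult_closed x by simp
    show "x \<oplus>\<^bsub>R\<^esub> y \<in> P"
      using x y additive_subgroup.a_closed[OF ideal.axioms(1)[OF ideal_P1]]
      by (simp add: P_def fst_add_R)
  qed (rule P_subset)
next
  fix a x assume "a \<in> P" "x \<in> carrier R"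
  moreover have "a \<otimes>\<^bsub>R\<^esub> x = x \<otimes>\<^bsub>R\<^esub> a" using calculation P_subset R.m_comm by blast
  ultimately show "x \<otimes>\<^bsub>R\<^esub> a \<in> P" "a \<otimes>\<^bsub>R\<^esub> x \<in> P" using P_mult_closed by simp_all
qed (rule R.ring_axioms)

lemma unit_or_in_P:
  assumes r: "r \<in> carrier R"
  shows "r \<in> Units R \<or> r \<in> P"
proof (rule disjCI)
  assume "r \<notin> P"
  obtain a b where r_eq: "r = (a, b)" by (cases r)
  have ab: "a \<in> carrier R1" "b \<in> carrier R2" "V1 a = V2 b" using r r_eq by (auto simp: carrier_R)
  have a_notin: "a \<notin> P1" using \<open>r \<notin> P\<close> r r_eq by (simp add: P_def)
  then have b_notin: "b \<notin> P2" using in_P1_iff in_P2_iff ab by auto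
  have a_unit: "a \<in> Units R1" using dvr_not_in_ideal_imp_unit[OF dvr1 ab(1) a_notin] .
  have b_unit: "b \<in> Units R2" using dvr_not_in_ideal_imp_unit[OF dvr2 ab(2) b_notin] .
  have inv_closed: "inv\<^bsub>R1\<^esub> a \<in> carrier R1" "inv\<^bsub>R2\<^esub> b \<in> carrier R2" using a_unit b_unit by simp_all
  have "V1 (inv\<^bsub>R1\<^esub> a) \<otimes>\<^bsub>Rbar\<^esub> V1 a = \<one>\<^bsub>Rbar\<^esub>"
    using ring_hom_mult[OF V1 inv_closed(1) ab(1)] a_unit ring_hom_one[OF V1] by simp
  moreover have "V2 (inv\<^bsub>R2\<^esub> b) \<otimes>\<^bsub>Rbar\<^esub> V1 a = \<one>\<^bsub>Rbar\<^esub>"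
    using ring_hom_mult[OF V2 inv_closed(2) ab(2)] b_unit ring_hom_one[OF V2] ab(3) by simp
  moreover have "V1 a \<noteq> \<zero>\<^bsub>Rbar\<^esub>" using a_notin in_P1_iff ab(1) by auto
  ultimately have "V1 (inv\<^bsub>R1\<^esub> a) = V2 (inv\<^bsub>R2\<^esub> b)"
    using Rbar.m_rcancel ring_hom_closed[OF V1] ring_hom_closed[OF V2] inv_closed ab by metis
  then have "(inv\<^bsub>R1\<^esub> a, inv\<^bsub>R2\<^esub> b) \<in> carrier R" using inv_closed by (simp add: carrier_R)
  then show "r \<in> Units R"
    unfolding Units_def using r r_eq a_unit b_unit
    by (auto intro!: bexI[of _ "(inv\<^bsub>R1\<^esub> a, inv\<^bsub>R2\<^esub> b)"] simp: mult_R one_R)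
qed

lemma one_notin_P: "\<one>\<^bsub>R\<^esub> \<notin> P"
  using one_notin_P1 by (simp add: P_def one_R)

lemma proper_ideal_subset_P:
  assumes J: "ideal J R" "J \<noteq> carrier R"
  shows "J \<subseteq> P"
proof
  fix r assume r: "r \<in> J"
  show "r \<in> P"
  proof (rule ccontr)
    assume "r \<notin> P"
    then have "r \<in> Units R" using unit_or_in_P ideal.Icarr[OF J(1) r] by blast
    then have "\<one>\<^bsub>R\<^esub> \<in> J" using ideal.I_l_closed[OF J(1) r, of "inv\<^bsub>R\<^esub> r"] by simp
    then show False using ideal.one_imp_carrier[OF J(1)] J(2) by blast
  qed
qed

lemma rad_memI:
  assumes J: "ideal J R" and y: "y \<in> P" and z: "z \<in> J"
    and fst_zero: "fst z = \<zero>\<^bsub>R1\<^esub> \<Longrightarrow> fst y = \<zero>\<^bsub>R1\<^esub>"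
    and snd_zero: "snd z = \<zero>\<^bsub>R2\<^esub> \<Longrightarrow> snd y = \<zero>\<^bsub>R2\<^esub>"
  shows "y \<in> rad R J"
proof -
  obtain y1 y2 z1 z2 where yz: "y = (y1, y2)" "z = (z1, z2)" by (cases y, cases z)
  have y_carrier: "y \<in> carrier R" and y1: "y1 \<in> P1" using y yz by (auto simp: P_def)
  then have y2: "y2 \<in> P2" using snd_in_P2 yz by blast
  have "z \<in> carrier R" using ideal.Icarr[OF J z] .
  then have z_carrier: "z1 \<in> carrier R1" "z2 \<in> carrier R2" using yz by (auto simp: carrier_R)
  obtain n1 where n1: "\<forall>m\<ge>n1. \<exists>w\<in>P1. y1 [^]\<^bsub>R1\<^esub> (m::nat) = z1 \<otimes>\<^bsub>R1\<^esub> w"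
    using dvr_pow_eventually_multiple[OF dvr1 P1_def p1 z_carrier(1) y1] fst_zero yz by auto
  obtain n2 where n2: "\<forall>m\<ge>n2. \<exists>w\<in>P2. y2 [^]\<^bsub>R2\<^esub> (m::nat) = z2 \<otimes>\<^bsub>R2\<^esub> w"
    using dvr_pow_eventually_multiple[OF dvr2 P2_def p2 z_carrier(2) y2] snd_zero yz by auto
  let ?n = "max n1 n2"
  obtain w1 w2 where w: "w1 \<in> P1" "y1 [^]\<^bsub>R1\<^esub> ?n = z1 \<otimes>\<^bsub>R1\<^esub> w1"
    "w2 \<in> P2" "y2 [^]\<^bsub>R2\<^esub> ?n = z2 \<otimes>\<^bsub>R2\<^esub> w2"
    using n1 n2 by (meson max.cobounded1 max.cobounded2)
  have "V1 w1 = \<zero>\<^bsub>Rbar\<^esub>" "V2 w2 = \<zero>\<^bsub>Rbar\<^esub>"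
    using w(1,3) in_P1_iff in_P2_iff P1_subset P2_subset by blast+
  then have "(w1, w2) \<in> carrier R" using w(1,3) P1_subset P2_subset by (auto simp: carrier_R)
  moreover have "y [^]\<^bsub>R\<^esub> ?n = z \<otimes>\<^bsub>R\<^esub> (w1, w2)" using w yz by (simp add: pow_R mult_R)
  ultimately have "y [^]\<^bsub>R\<^esub> ?n \<in> J" using ideal.I_r_closed[OF J z] by simp
  then show ?thesis unfolding rad_def using y_carrier by blast
qed

lemma fst_mult_R_eq_zero_iff:
  "x \<in> carrier R \<Longrightarrow> y \<in> carrier R \<Longrightarrow> fst (x \<otimes>\<^bsub>R\<^esub> y) = \<zero>\<^bsub>R1\<^esub> \<longleftrightarrow> fst x = \<zero>\<^bsub>R1\<^esub> \<or> fst y = \<zero>\<^bsub>R1\<^esub>"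
  by (simp add: fst_mult_R fst_carrier_R R1.integral_iff)

lemma snd_mult_R_eq_zero_iff:
  "x \<in> carrier R \<Longrightarrow> y \<in> carrier R \<Longrightarrow> snd (x \<otimes>\<^bsub>R\<^esub> y) = \<zero>\<^bsub>R2\<^esub> \<longleftrightarrow> snd x = \<zero>\<^bsub>R2\<^esub> \<or> snd y = \<zero>\<^bsub>R2\<^esub>"
  by (simp add: snd_mult_R snd_carrier_R R2.integral_iff)

text \<open>Unless \<open>a c\<close> or \<open>b c\<close> is caught by \<open>rad_memI\<close> with \<open>z = a b c\<close>, the factors \<open>a\<close> and \<open>b\<close>
  vanish in complementary components, so that \<open>a b = 0\<close>.\<close>

lemma two_absorbing_condition_in_P:
  assumes J: "ideal J R" and abc: "a \<in> P" "b \<in> P" "c \<in> P" and prod: "a \<otimes>\<^bsub>R\<^esub> b \<otimes>\<^bsub>R\<^esub> c \<in> J"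
  shows "a \<otimes>\<^bsub>R\<^esub> b \<in> J \<or> a \<otimes>\<^bsub>R\<^esub> c \<in> rad R J \<or> b \<otimes>\<^bsub>R\<^esub> c \<in> rad R J"
proof -
  have carrier: "a \<in> carrier R" "b \<in> carrier R" "c \<in> carrier R" using abc P_subset by auto
  note zero_iff = fst_mult_R_eq_zero_iff snd_mult_R_eq_zero_iff
  consider
    "(fst b = \<zero>\<^bsub>R1\<^esub> \<longrightarrow> fst a = \<zero>\<^bsub>R1\<^esub> \<or> fst c = \<zero>\<^bsub>R1\<^esub>) \<and> (snd b = \<zero>\<^bsub>R2\<^esub> \<longrightarrow> snd a = \<zero>\<^bsub>R2\<^esub> \<or> snd c = \<zero>\<^bsub>R2\<^esub>)"
  | "(fst a = \<zero>\<^bsub>R1\<^esub> \<longrightarrow> fst b = \<zero>\<^bsub>R1\<^esub> \<or> fst c = \<zero>\<^bsub>R1\<^esub>) \<and> (snd a = \<zero>\<^bsub>R2\<^esub> \<longrightarrow> snd b = \<zero>\<^bsub>R2\<^esub> \<or> snd c = \<zero>\<^bsub>R2\<^esub>)"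
  | "fst (a \<otimes>\<^bsub>R\<^esub> b) = \<zero>\<^bsub>R1\<^esub>" "snd (a \<otimes>\<^bsub>R\<^esub> b) = \<zero>\<^bsub>R2\<^esub>"
    using carrier zero_iff by blast
  then show ?thesis
  proof cases
    case 1
    have "a \<otimes>\<^bsub>R\<^esub> c \<in> rad R J"
      using rad_memI[OF J P_mult_closed[OF carrier(1) abc(3)] prod] 1 carrier zero_iff by auto
    then show ?thesis by blast
  next
    case 2
    have "b \<otimes>\<^bsub>R\<^esub> c \<in> rad R J"
      using rad_memI[OF J P_mult_closed[OF carrier(2) abc(3)] prod] 2 carrier zero_iff by auto
    then show ?thesis by blast
  next
    case 3
    then have "a \<otimes>\<^bsub>R\<^esub> b = \<zero>\<^bsub>R\<^esub>" by (simp add: zero_R prod_eq_iff)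
    then show ?thesis using additive_subgroup.zero_closed[OF ideal.axioms(1)[OF J]] by simp
  qed
qed

lemma proper_ideal_two_absorbing_primary:
  assumes J: "ideal J R" "J \<noteq> carrier R"
  shows "two_absorbing_primary R J"
  unfolding two_absorbing_primary_def
proof (intro conjI J ballI impI)
  fix a b c assume abc: "a \<in> carrier R" "b \<in> carrier R" "c \<in> carrier R"
    and prod: "a \<otimes>\<^bsub>R\<^esub> b \<otimes>\<^bsub>R\<^esub> c \<in> J"
  show "a \<otimes>\<^bsub>R\<^esub> b \<in> J \<or> a \<otimes>\<^bsub>R\<^esub> c \<in> rad R J \<or> b \<otimes>\<^bsub>R\<^esub> c \<in> rad R J"
  proof (cases "a \<in> Units R \<or> b \<in> Units R \<or> c \<in> Units R")
    case True
    then show ?thesis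
      using R.ideal_triple_product_unit[OF J(1) abc prod] R.ideal_subset_rad[OF J(1)] by blast
  next
    case False
    then show ?thesis using two_absorbing_condition_in_P[OF J(1) _ _ _ prod] unit_or_in_P abc by blast
  qed
qed

end

section \<open>Modules over the pullback ring\<close>

context dvr_pullback
begin

lemma proper_submodule_pseudo_absorbing_primary:
  assumes M: "module R M" and N: "submodule N R M" and proper: "N \<noteq> carrier M"
  shows "pseudo_absorbing_primary R M N"
proof -
  have "two_absorbing_primary R (mod_colon R N M)"
    using module.ideal_mod_colon[OF M N] module.mod_colon_proper[OF M module.submoduleE(1)[OF M N] proper]
    by (rule proper_ideal_two_absorbing_primary)
  then show ?thesis unfolding pseudo_absorbing_primary_def using N proper by blast
qed

lemma pap_multiplication_proper_cyclic_submodule: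
  assumes M: "module R M" and pap: "pap_multiplication_module R M" and m: "m \<in> carrier M"
    and proper: "cyclic_submodule R M m \<noteq> carrier M"
  shows "\<exists>J \<subseteq> P. cyclic_submodule R M m = ideal_mod_prod J R M"
proof -
  interpret M: module R M by (rule M)
  obtain I where I: "ideal I R" "cyclic_submodule R M m = ideal_mod_prod I R M"
    using pap proper_submodule_pseudo_absorbing_primary[OF M M.submodule_cyclic_submodule[OF m] proper]
    unfolding pap_multiplication_module_def by blast
  have "I \<noteq> carrier R" using I(2) proper M.ideal_mod_prod_carrier by auto
  then show ?thesis using I proper_ideal_subset_P by blast
qed

lemma smult_eq_self_imp_zero:
  assumes M: "module R M" and m: "m \<in> carrier M" and q: "q \<in> P" and eq: "q \<odot>\<^bsub>M\<^esub> m = m"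
  shows "m = \<zero>\<^bsub>M\<^esub>"
proof -
  interpret M: module R M by (rule M)
  let ?u = "\<one>\<^bsub>R\<^esub> \<ominus>\<^bsub>R\<^esub> q"
  have q_carrier: "q \<in> carrier R" using q P_subset by blast
  have "?u \<notin> P"
  proof
    assume "?u \<in> P"
    then have "?u \<oplus>\<^bsub>R\<^esub> q \<in> P" using q by (rule additive_subgroup.a_closed[OF ideal.axioms(1)[OF ideal_P]])
    moreover have "?u \<oplus>\<^bsub>R\<^esub> q = \<one>\<^bsub>R\<^esub>" using q_carrier by (simp add: R.minus_eq R.add.m_assoc R.l_neg)
    ultimately show False using one_notin_P by simp
  qed
  moreover have "?u \<in> carrier R" using q_carrier by (rule R.minus_closed[OF R.one_closed])
  ultimately have u: "?u \<in> Units R" using unit_or_in_P by blast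
  have "?u \<odot>\<^bsub>M\<^esub> m = \<one>\<^bsub>R\<^esub> \<odot>\<^bsub>M\<^esub> m \<oplus>\<^bsub>M\<^esub> (\<ominus>\<^bsub>R\<^esub> q) \<odot>\<^bsub>M\<^esub> m"
    using q_carrier m by (simp add: R.minus_eq M.smult_l_distr)
  also have "\<dots> = m \<oplus>\<^bsub>M\<^esub> \<ominus>\<^bsub>M\<^esub> m" using q_carrier m eq by (simp add: M.smult_l_minus)
  also have "\<dots> = \<zero>\<^bsub>M\<^esub>" using m by (rule M.r_neg)
  finally have u_m: "?u \<odot>\<^bsub>M\<^esub> m = \<zero>\<^bsub>M\<^esub>" .
  have "inv\<^bsub>R\<^esub> ?u \<odot>\<^bsub>M\<^esub> (?u \<odot>\<^bsub>M\<^esub> m) = (inv\<^bsub>R\<^esub> ?u \<otimes>\<^bsub>R\<^esub> ?u) \<odot>\<^bsub>M\<^esub> m"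
    using u m by (intro M.smult_assoc1[symmetric]) auto
  also have "\<dots> = m" using R.Units_l_inv[OF u] m by simp
  finally show ?thesis using u_m R.Units_inv_closed[OF u] by simp
qed

text \<open>A Nakayama-type argument: if \<open>M = P M\<close> and \<open>R m = J M\<close> with \<open>J \<subseteq> P\<close>, then
  \<open>R m = J (P M) \<subseteq> P (J M) = P m\<close>, so \<open>m = q m\<close> for some \<open>q \<in> P\<close>.\<close>

lemma cyclic_submodule_eq_P_multiple_imp_zero:
  assumes M: "module R M" and PM: "ideal_mod_prod P R M = carrier M" and J: "J \<subseteq> P"
    and m: "m \<in> carrier M" and cyc: "cyclic_submodule R M m = ideal_mod_prod J R M"
  shows "m = \<zero>\<^bsub>M\<^esub>"
proof -
  interpret M: module R M by (rule M)
  define Pm where "Pm = {q \<odot>\<^bsub>M\<^esub> m | q. q \<in> P}"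
  have Pm: "submodule Pm R M" unfolding Pm_def by (rule M.submodule_smult_ideal[OF ideal_P m])
  have J_carrier: "J \<subseteq> carrier R" using J P_subset by blast
  have "ideal_mod_prod P R M \<subseteq> {y \<in> carrier M. \<forall>k \<in> J. k \<odot>\<^bsub>M\<^esub> y \<in> Pm}"
  proof (rule M.ideal_mod_prod_least[OF M.submodule_smult_colon[OF Pm J_carrier]])
    fix q y assume q: "q \<in> P" and y: "y \<in> carrier M"
    have q_carrier: "q \<in> carrier R" using q P_subset by blast
    have "k \<odot>\<^bsub>M\<^esub> (q \<odot>\<^bsub>M\<^esub> y) \<in> Pm" if k: "k \<in> J" for k
    proof -
      have k_carrier: "k \<in> carrier R" using k J_carrier by blast
      have "k \<odot>\<^bsub>M\<^esub> y \<in> cyclic_submodule R M m" using cyc M.ideal_mod_prod_smult_mem[OF k y] by simp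
      then obtain r where r: "r \<in> carrier R" "k \<odot>\<^bsub>M\<^esub> y = r \<odot>\<^bsub>M\<^esub> m" unfolding cyclic_submodule_def by blast
      have "k \<odot>\<^bsub>M\<^esub> (q \<odot>\<^bsub>M\<^esub> y) = q \<odot>\<^bsub>M\<^esub> (k \<odot>\<^bsub>M\<^esub> y)"
        using k_carrier q_carrier y by (simp add: M.smult_assoc1[symmetric] R.m_comm)
      also have "\<dots> = (q \<otimes>\<^bsub>R\<^esub> r) \<odot>\<^bsub>M\<^esub> m" using r q_carrier m by (simp add: M.smult_assoc1)
      finally show ?thesis
        unfolding Pm_def using ideal.I_r_closed[OF ideal_P q r(1)] by blast
    qed
    then show "q \<odot>\<^bsub>M\<^esub> y \<in> {y \<in> carrier M. \<forall>k \<in> J. k \<odot>\<^bsub>M\<^esub> y \<in> Pm}" using q_carrier y by simp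
  qed
  then have "ideal_mod_prod J R M \<subseteq> Pm"
    using PM by (intro M.ideal_mod_prod_least[OF Pm]) auto
  then have "m \<in> Pm" using cyc M.cyclic_submodule_self[OF m] by blast
  then obtain q where "q \<in> P" "q \<odot>\<^bsub>M\<^esub> m = m" unfolding Pm_def by auto
  then show ?thesis using smult_eq_self_imp_zero[OF M m] by blast
qed

lemma pap_multiplication_module_imp_cyclic:
  assumes M: "module R M" and nontrivial: "carrier M \<noteq> {\<zero>\<^bsub>M\<^esub>}"
    and pap: "pap_multiplication_module R M"
  shows "cyclic_module R M"
proof -
  interpret M: module R M by (rule M)
  have PM_carrier: "ideal_mod_prod P R M \<subseteq> carrier M"
    using M.submoduleE(1)[OF M.submodule_ideal_mod_prod[OF P_subset]] .
  show ?thesis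
  proof (cases "carrier M \<subseteq> ideal_mod_prod P R M")
    case False
    then obtain m where m: "m \<in> carrier M" "m \<notin> ideal_mod_prod P R M" by blast
    have "cyclic_submodule R M m = carrier M"
    proof (rule ccontr)
      assume "cyclic_submodule R M m \<noteq> carrier M"
      then obtain J where "J \<subseteq> P" "cyclic_submodule R M m = ideal_mod_prod J R M"
        using pap_multiplication_proper_cyclic_submodule[OF M pap m(1)] by blast
      then have "m \<in> ideal_mod_prod P R M"
        using M.cyclic_submodule_self[OF m(1)] M.ideal_mod_prod_mono[OF _ P_subset] by blast
      then show False using m(2) by blast
    qed
    then show ?thesis unfolding cyclic_module_def using m(1) by blast
  next
    case True
    then have PM: "ideal_mod_prod P R M = carrier M" using PM_carrier by blast
    obtain m where m: "m \<in> carrier M" "m \<noteq> \<zero>\<^bsub>M\<^esub>" using nontrivial M.zero_closed by blast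
    have "cyclic_submodule R M m = carrier M"
    proof (rule ccontr)
      assume "cyclic_submodule R M m \<noteq> carrier M"
      then obtain J where "J \<subseteq> P" "cyclic_submodule R M m = ideal_mod_prod J R M"
        using pap_multiplication_proper_cyclic_submodule[OF M pap m(1)] by blast
      then have "m = \<zero>\<^bsub>M\<^esub>" by (rule cyclic_submodule_eq_P_multiple_imp_zero[OF M PM _ m(1)])
      then show False using m(2) by blast
    qed
    then show ?thesis unfolding cyclic_module_def using m(1) by blast
  qed
qed

lemma cyclic_submodule_Int_trivial:
  assumes M: "module R M" and T: "submodule T R M" and k: "k \<in> carrier M" "k \<notin> T"
    and annihilated: "\<And>q. q \<in> P \<Longrightarrow> q \<odot>\<^bsub>M\<^esub> k = \<zero>\<^bsub>M\<^esub>"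
    and x: "x \<in> cyclic_submodule R M k" "x \<in> T"
  shows "x = \<zero>\<^bsub>M\<^esub>"
proof -
  interpret M: module R M by (rule M)
  obtain r where r: "r \<in> carrier R" "x = r \<odot>\<^bsub>M\<^esub> k" using x(1) unfolding cyclic_submodule_def by blast
  consider "r \<in> P" | "r \<in> Units R" using unit_or_in_P[OF r(1)] by blast
  then show ?thesis
  proof cases
    case 1
    then show ?thesis using annihilated r(2) by simp
  next
    case 2
    have "inv\<^bsub>R\<^esub> r \<odot>\<^bsub>M\<^esub> x \<in> T" by (rule M.submoduleE(4)[OF T R.Units_inv_closed[OF 2] x(2)])
    moreover have "inv\<^bsub>R\<^esub> r \<odot>\<^bsub>M\<^esub> x = k" using 2 r k(1) by (simp add: M.smult_assoc1[symmetric])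
    ultimately have "k \<in> T" by simp
    then show ?thesis using k(2) by blast
  qed
qed

lemma trivial_module_separated:
  assumes M: "module R M" and trivial: "carrier M = {\<zero>\<^bsub>M\<^esub>}"
  shows "separated R R1 R2 P1 P2 M"
proof -
  interpret M: module R M by (rule M)
  have "ideal_mod_prod I R M = {\<zero>\<^bsub>M\<^esub>}" if "I \<subseteq> carrier R" for I
    using M.submoduleE(1)[OF M.submodule_ideal_mod_prod[OF that]]
      M.submodule_zero[OF M.submodule_ideal_mod_prod[OF that]] trivial by blast
  moreover have "P1_oplus_0 \<subseteq> carrier R" "zero_oplus_P2 \<subseteq> carrier R"
    using P1_oplus_0_subset zero_oplus_P2_subset P_subset by blast+
  ultimately show ?thesis unfolding separated_def by simp
qed

context
  fixes S :: "('a \<times> 'b, 's) module" and M :: "('a \<times> 'b, 't) module" and \<phi> :: "'s \<Rightarrow> 't"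
  assumes rep: "sep_rep R R1 R2 P1 P2 S M \<phi>" and M: "module R M"
begin

lemma sep_rep_module: "module R S"
  using rep unfolding sep_rep_def by blast

lemma sep_rep_mod_hom: "mod_hom R S M \<phi>"
  using rep unfolding sep_rep_def by blast

lemma sep_rep_onto: "\<phi> ` carrier S = carrier M"
  using rep unfolding sep_rep_def by blast

lemma sep_rep_separated:
  "ideal_mod_prod P1_oplus_0 R S \<inter> ideal_mod_prod zero_oplus_P2 R S = {\<zero>\<^bsub>S\<^esub>}"
  using rep unfolding sep_rep_def separated_def by blast

lemma sep_rep_trivial_kernel_submodule:
  assumes L: "submodule L R S" and L_ker: "L \<subseteq> {x \<in> carrier S. \<phi> x = \<zero>\<^bsub>M\<^esub>}"
    and L_sep: "\<And>a1 a2. a1 \<in> ideal_mod_prod P1_oplus_0 R S \<Longrightarrow> a2 \<in> ideal_mod_prod zero_oplus_P2 R S \<Longrightarrow>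
      a1 \<ominus>\<^bsub>S\<^esub> a2 \<in> L \<Longrightarrow> a1 \<in> L"
  shows "L = {\<zero>\<^bsub>S\<^esub>}"
proof (rule sep_rep_trivial_submodule[OF rep M _ _ L])
  show "P1_oplus_0 \<subseteq> carrier R" using P1_oplus_0_subset P_subset by (rule order_trans)
  show "zero_oplus_P2 \<subseteq> carrier R" using zero_oplus_P2_subset P_subset by (rule order_trans)
  show "\<phi> l = \<zero>\<^bsub>M\<^esub>" if "l \<in> L" for l using L_ker that by blast
qed (rule L_sep)

lemma sep_rep_kernel_Int_P1:
  "ideal_mod_prod P1_oplus_0 R S \<inter> {x \<in> carrier S. \<phi> x = \<zero>\<^bsub>M\<^esub>} = {\<zero>\<^bsub>S\<^esub>}"
proof -
  interpret S: module R S by (rule sep_rep_module)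
  let ?A1 = "ideal_mod_prod P1_oplus_0 R S" and ?A2 = "ideal_mod_prod zero_oplus_P2 R S"
  have A1: "submodule ?A1 R S" and A2: "submodule ?A2 R S"
    using S.submodule_ideal_mod_prod P1_oplus_0_subset zero_oplus_P2_subset P_subset by auto
  show ?thesis
  proof (rule sep_rep_trivial_kernel_submodule)
    show "submodule (?A1 \<inter> {x \<in> carrier S. \<phi> x = \<zero>\<^bsub>M\<^esub>}) R S"
      by (rule S.submodule_Int[OF A1 S.submodule_kernel[OF M sep_rep_mod_hom]])
    fix a1 a2 assume a1: "a1 \<in> ?A1" and a2: "a2 \<in> ?A2"
      and diff: "a1 \<ominus>\<^bsub>S\<^esub> a2 \<in> ?A1 \<inter> {x \<in> carrier S. \<phi> x = \<zero>\<^bsub>M\<^esub>}"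
    have carrier: "a1 \<in> carrier S" "a2 \<in> carrier S" using a1 a2 S.submoduleE(1)[OF A1] S.submoduleE(1)[OF A2] by auto
    have "a1 \<ominus>\<^bsub>S\<^esub> a2 \<in> ?A1" using diff by blast
    then have "a1 \<ominus>\<^bsub>S\<^esub> (a1 \<ominus>\<^bsub>S\<^esub> a2) \<in> ?A1" by (rule S.submodule_minus[OF A1 a1])
    then have "a2 \<in> ?A1" by (simp add: S.minus_minus_cancel[OF carrier])
    then have "a2 = \<zero>\<^bsub>S\<^esub>" using a2 sep_rep_separated by blast
    then show "a1 \<in> ?A1 \<inter> {x \<in> carrier S. \<phi> x = \<zero>\<^bsub>M\<^esub>}" using diff S.minus_zero_right[OF carrier(1)] by simp
  qed blast
qed

lemma sep_rep_kernel_Int_P2: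
  "ideal_mod_prod zero_oplus_P2 R S \<inter> {x \<in> carrier S. \<phi> x = \<zero>\<^bsub>M\<^esub>} = {\<zero>\<^bsub>S\<^esub>}"
proof -
  interpret S: module R S by (rule sep_rep_module)
  let ?A1 = "ideal_mod_prod P1_oplus_0 R S" and ?A2 = "ideal_mod_prod zero_oplus_P2 R S"
  have A1: "submodule ?A1 R S" and A2: "submodule ?A2 R S"
    using S.submodule_ideal_mod_prod P1_oplus_0_subset zero_oplus_P2_subset P_subset by auto
  have K: "submodule {x \<in> carrier S. \<phi> x = \<zero>\<^bsub>M\<^esub>} R S" by (rule S.submodule_kernel[OF M sep_rep_mod_hom])
  show ?thesis
  proof (rule sep_rep_trivial_kernel_submodule)
    show "submodule (?A2 \<inter> {x \<in> carrier S. \<phi> x = \<zero>\<^bsub>M\<^esub>}) R S" by (rule S.submodule_Int[OF A2 K])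
    fix a1 a2 assume a1: "a1 \<in> ?A1" and a2: "a2 \<in> ?A2"
      and diff: "a1 \<ominus>\<^bsub>S\<^esub> a2 \<in> ?A2 \<inter> {x \<in> carrier S. \<phi> x = \<zero>\<^bsub>M\<^esub>}"
    have carrier: "a1 \<in> carrier S" "a2 \<in> carrier S" using a1 a2 S.submoduleE(1)[OF A1] S.submoduleE(1)[OF A2] by auto
    have "a1 \<ominus>\<^bsub>S\<^esub> a2 \<in> ?A2" using diff by blast
    then have "(a1 \<ominus>\<^bsub>S\<^esub> a2) \<oplus>\<^bsub>S\<^esub> a2 \<in> ?A2" using a2 by (rule S.submoduleE(5)[OF A2])
    then have "a1 \<in> ?A2" by (simp add: S.minus_add_cancel[OF carrier])
    then have "a1 = \<zero>\<^bsub>S\<^esub>" using a1 sep_rep_separated by blast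
    then show "a1 \<in> ?A2 \<inter> {x \<in> carrier S. \<phi> x = \<zero>\<^bsub>M\<^esub>}" using S.submodule_zero[OF A2] S.submodule_zero[OF K] by simp
  qed blast
qed

lemma sep_rep_kernel_annihilated_by_P:
  assumes q: "q \<in> P" and k: "k \<in> carrier S" "\<phi> k = \<zero>\<^bsub>M\<^esub>"
  shows "q \<odot>\<^bsub>S\<^esub> k = \<zero>\<^bsub>S\<^esub>"
proof -
  interpret S: module R S by (rule sep_rep_module)
  let ?K = "{x \<in> carrier S. \<phi> x = \<zero>\<^bsub>M\<^esub>}"
  have K: "submodule ?K R S" by (rule S.submodule_kernel[OF M sep_rep_mod_hom])
  have k_K: "k \<in> ?K" using k by blast
  obtain q1 q2 where q_eq: "q = (q1, q2)" by (cases q)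
  have q1: "(q1, \<zero>\<^bsub>R2\<^esub>) \<in> P1_oplus_0" using q q_eq by (auto simp: P_def)
  have q2: "(\<zero>\<^bsub>R1\<^esub>, q2) \<in> zero_oplus_P2" using q q_eq snd_in_P2 by (auto simp: P_def)
  have q1_carrier: "(q1, \<zero>\<^bsub>R2\<^esub>) \<in> carrier R" using q1 P1_oplus_0_subset P_subset by blast
  have q2_carrier: "(\<zero>\<^bsub>R1\<^esub>, q2) \<in> carrier R" using q2 zero_oplus_P2_subset P_subset by blast
  have "(q1, \<zero>\<^bsub>R2\<^esub>) \<odot>\<^bsub>S\<^esub> k \<in> ideal_mod_prod P1_oplus_0 R S \<inter> ?K"
    using S.ideal_mod_prod_smult_mem[OF q1 k(1)] S.submoduleE(4)[OF K q1_carrier k_K] by blast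
  then have "(q1, \<zero>\<^bsub>R2\<^esub>) \<odot>\<^bsub>S\<^esub> k = \<zero>\<^bsub>S\<^esub>" using sep_rep_kernel_Int_P1 by blast
  moreover have "(\<zero>\<^bsub>R1\<^esub>, q2) \<odot>\<^bsub>S\<^esub> k \<in> ideal_mod_prod zero_oplus_P2 R S \<inter> ?K"
    using S.ideal_mod_prod_smult_mem[OF q2 k(1)] S.submoduleE(4)[OF K q2_carrier k_K] by blast
  then have "(\<zero>\<^bsub>R1\<^esub>, q2) \<odot>\<^bsub>S\<^esub> k = \<zero>\<^bsub>S\<^esub>" using sep_rep_kernel_Int_P2 by blast
  moreover have "q \<odot>\<^bsub>S\<^esub> k = (q1, \<zero>\<^bsub>R2\<^esub>) \<odot>\<^bsub>S\<^esub> k \<oplus>\<^bsub>S\<^esub> (\<zero>\<^bsub>R1\<^esub>, q2) \<odot>\<^bsub>S\<^esub> k"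
    using P_decomp[of q1 q2] q q_eq S.smult_l_distr[OF q1_carrier q2_carrier k(1)] by simp
  ultimately show ?thesis by simp
qed

lemma sep_rep_kernel_subset:
  assumes T: "submodule T R S" and PS_T: "\<And>q y. q \<in> P \<Longrightarrow> y \<in> carrier S \<Longrightarrow> q \<odot>\<^bsub>S\<^esub> y \<in> T"
  shows "{x \<in> carrier S. \<phi> x = \<zero>\<^bsub>M\<^esub>} \<subseteq> T"
proof
  interpret S: module R S by (rule sep_rep_module)
  let ?K = "{x \<in> carrier S. \<phi> x = \<zero>\<^bsub>M\<^esub>}"
  let ?A1 = "ideal_mod_prod P1_oplus_0 R S" and ?A2 = "ideal_mod_prod zero_oplus_P2 R S"
  have K: "submodule ?K R S" by (rule S.submodule_kernel[OF M sep_rep_mod_hom])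
  have A1_T: "?A1 \<subseteq> T"
  proof (rule S.ideal_mod_prod_least[OF T])
    fix r y assume "r \<in> P1_oplus_0" "y \<in> carrier S"
    then show "r \<odot>\<^bsub>S\<^esub> y \<in> T" using PS_T P1_oplus_0_subset by blast
  qed
  have A2_T: "?A2 \<subseteq> T"
  proof (rule S.ideal_mod_prod_least[OF T])
    fix r y assume "r \<in> zero_oplus_P2" "y \<in> carrier S"
    then show "r \<odot>\<^bsub>S\<^esub> y \<in> T" using PS_T zero_oplus_P2_subset by blast
  qed
  fix k assume k: "k \<in> ?K"
  then have k_carrier: "k \<in> carrier S" by blast
  show "k \<in> T"
  proof (rule ccontr)
    assume k_notin: "k \<notin> T"
    let ?L = "cyclic_submodule R S k"
    have L: "submodule ?L R S" by (rule S.submodule_cyclic_submodule[OF k_carrier])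
    have L_ker: "?L \<subseteq> ?K" using k S.submoduleE(4)[OF K] unfolding cyclic_submodule_def by blast
    have annihilated: "q \<odot>\<^bsub>S\<^esub> k = \<zero>\<^bsub>S\<^esub>" if "q \<in> P" for q
      using sep_rep_kernel_annihilated_by_P that k by blast
    have "?L = {\<zero>\<^bsub>S\<^esub>}"
    proof (rule sep_rep_trivial_kernel_submodule[OF L L_ker])
      fix a1 a2 assume a1: "a1 \<in> ?A1" and a2: "a2 \<in> ?A2" and diff: "a1 \<ominus>\<^bsub>S\<^esub> a2 \<in> ?L"
      have carrier: "a1 \<in> carrier S" "a2 \<in> carrier S"
        using a1 a2 A1_T A2_T S.submoduleE(1)[OF T] by blast+
      have diff_T: "a1 \<ominus>\<^bsub>S\<^esub> a2 \<in> T" using a1 a2 A1_T A2_T S.submodule_minus[OF T] by blast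
      have "a1 \<ominus>\<^bsub>S\<^esub> a2 = \<zero>\<^bsub>S\<^esub>"
        by (rule cyclic_submodule_Int_trivial[OF sep_rep_module T k_carrier k_notin annihilated diff diff_T])
      then have "a1 = a2" by (rule S.minus_eq_zero_imp_eq[OF carrier])
      then have "a1 = \<zero>\<^bsub>S\<^esub>" using a1 a2 sep_rep_separated by blast
      then show "a1 \<in> ?L" using S.submodule_zero[OF L] by simp
    qed
    then have "k = \<zero>\<^bsub>S\<^esub>" using S.cyclic_submodule_self[OF k_carrier] by blast
    then show False using k_notin S.submodule_zero[OF T] by simp
  qed
qed

lemma sep_rep_kernel_coset:
  assumes m: "carrier M = cyclic_submodule R M m" and s: "s \<in> carrier S" "\<phi> s = m"
    and y: "y \<in> carrier S"
  obtains r where "r \<in> carrier R" "y \<ominus>\<^bsub>S\<^esub> r \<odot>\<^bsub>S\<^esub> s \<in> carrier S"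
    "\<phi> (y \<ominus>\<^bsub>S\<^esub> r \<odot>\<^bsub>S\<^esub> s) = \<zero>\<^bsub>M\<^esub>"
proof -
  interpret S: module R S by (rule sep_rep_module)
  interpret M: module R M by (rule M)
  have \<phi>: "\<phi> \<in> carrier S \<rightarrow> carrier M" "\<And>r x. r \<in> carrier R \<Longrightarrow> x \<in> carrier S \<Longrightarrow> \<phi> (r \<odot>\<^bsub>S\<^esub> x) = r \<odot>\<^bsub>M\<^esub> \<phi> x"
    using sep_rep_mod_hom unfolding mod_hom_def by blast+
  have m_carrier: "m \<in> carrier M" using \<phi>(1) s by blast
  have "\<phi> y \<in> carrier M" using \<phi>(1) y by blast
  then obtain r where r: "r \<in> carrier R" "\<phi> y = r \<odot>\<^bsub>M\<^esub> m" using m unfolding cyclic_submodule_def by blast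
  have rs: "r \<odot>\<^bsub>S\<^esub> s \<in> carrier S" using r(1) s(1) by simp
  have "\<phi> (y \<ominus>\<^bsub>S\<^esub> r \<odot>\<^bsub>S\<^esub> s) = \<phi> y \<ominus>\<^bsub>M\<^esub> \<phi> (r \<odot>\<^bsub>S\<^esub> s)"
    by (rule S.mod_hom_minus[OF M sep_rep_mod_hom y rs])
  also have "\<dots> = r \<odot>\<^bsub>M\<^esub> m \<ominus>\<^bsub>M\<^esub> r \<odot>\<^bsub>M\<^esub> m" using \<phi>(2)[OF r(1) s(1)] r(2) s(2) by simp
  also have "\<dots> = \<zero>\<^bsub>M\<^esub>" unfolding a_minus_def using r(1) m_carrier by (simp add: M.r_neg)
  finally show ?thesis using that r(1) y rs by (simp add: a_minus_def)
qed

lemma sep_rep_cyclic: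
  assumes "cyclic_module R M"
  shows "cyclic_module R S"
proof -
  interpret S: module R S by (rule sep_rep_module)
  obtain m where m: "m \<in> carrier M" "carrier M = cyclic_submodule R M m"
    using assms unfolding cyclic_module_def by blast
  obtain s where s: "s \<in> carrier S" "\<phi> s = m" using m(1) unfolding sep_rep_onto[symmetric] by blast
  let ?T = "cyclic_submodule R S s"
  have T: "submodule ?T R S" by (rule S.submodule_cyclic_submodule[OF s(1)])
  have rs_T: "r \<odot>\<^bsub>S\<^esub> s \<in> ?T" if "r \<in> carrier R" for r
    using that unfolding cyclic_submodule_def by blast
  have PS_T: "q \<odot>\<^bsub>S\<^esub> y \<in> ?T" if q: "q \<in> P" and y: "y \<in> carrier S" for q y
  proof -
    obtain r where r: "r \<in> carrier R" "y \<ominus>\<^bsub>S\<^esub> r \<odot>\<^bsub>S\<^esub> s \<in> carrier S"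
      "\<phi> (y \<ominus>\<^bsub>S\<^esub> r \<odot>\<^bsub>S\<^esub> s) = \<zero>\<^bsub>M\<^esub>" using sep_rep_kernel_coset[OF m(2) s y] by blast
    have q_carrier: "q \<in> carrier R" using q P_subset by blast
    have rs: "r \<odot>\<^bsub>S\<^esub> s \<in> carrier S" using r(1) s(1) by simp
    have "q \<odot>\<^bsub>S\<^esub> y = q \<odot>\<^bsub>S\<^esub> ((y \<ominus>\<^bsub>S\<^esub> r \<odot>\<^bsub>S\<^esub> s) \<oplus>\<^bsub>S\<^esub> r \<odot>\<^bsub>S\<^esub> s)"
      by (simp add: S.minus_add_cancel[OF y rs])
    also have "\<dots> = q \<odot>\<^bsub>S\<^esub> (y \<ominus>\<^bsub>S\<^esub> r \<odot>\<^bsub>S\<^esub> s) \<oplus>\<^bsub>S\<^esub> q \<odot>\<^bsub>S\<^esub> (r \<odot>\<^bsub>S\<^esub> s)"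
      by (rule S.smult_r_distr[OF q_carrier r(2) rs])
    also have "\<dots> = (q \<otimes>\<^bsub>R\<^esub> r) \<odot>\<^bsub>S\<^esub> s"
      using sep_rep_kernel_annihilated_by_P[OF q r(2,3)] q_carrier r(1) s(1) by (simp add: S.smult_assoc1)
    finally show ?thesis using rs_T q_carrier r(1) by simp
  qed
  have "y \<in> ?T" if y: "y \<in> carrier S" for y
  proof -
    obtain r where r: "r \<in> carrier R" "y \<ominus>\<^bsub>S\<^esub> r \<odot>\<^bsub>S\<^esub> s \<in> carrier S"
      "\<phi> (y \<ominus>\<^bsub>S\<^esub> r \<odot>\<^bsub>S\<^esub> s) = \<zero>\<^bsub>M\<^esub>" using sep_rep_kernel_coset[OF m(2) s y] by blast
    have "y \<ominus>\<^bsub>S\<^esub> r \<odot>\<^bsub>S\<^esub> s \<in> ?T" using sep_rep_kernel_subset[OF T PS_T] r(2,3) by blast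
    then have "(y \<ominus>\<^bsub>S\<^esub> r \<odot>\<^bsub>S\<^esub> s) \<oplus>\<^bsub>S\<^esub> r \<odot>\<^bsub>S\<^esub> s \<in> ?T"
      using rs_T[OF r(1)] by (rule S.submoduleE(5)[OF T])
    then show ?thesis using S.minus_add_cancel[OF y] r(1) s(1) by simp
  qed
  then have "carrier S = ?T" using S.submoduleE(1)[OF T] by blast
  then show ?thesis unfolding cyclic_module_def using s(1) by blast
qed

end

end

theorem theorem4p2:
  fixes R1 :: "'a ring" and R2 :: "'b ring" and Rbar :: "'c ring"
    and V1 :: "'a \<Rightarrow> 'c" and V2 :: "'b \<Rightarrow> 'c" and p1 :: 'a and p2 :: 'b
    and S :: "('a \<times> 'b, 's) module" and M :: "('a \<times> 'b, 'm) module"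
    and \<phi> :: "'s \<Rightarrow> 'm"
  defines "P1 \<equiv> PIdl\<^bsub>R1\<^esub> p1" and "P2 \<equiv> PIdl\<^bsub>R2\<^esub> p2"
    and "R \<equiv> pullback_ring R1 R2 V1 V2"
  assumes p1: "p1 \<in> carrier R1" and p2: "p2 \<in> carrier R2"
    and dvr1: "dvr R1 P1" and dvr2: "dvr R2 P2"
    and field: "field Rbar"
    and V1: "V1 \<in> ring_hom R1 Rbar" and V1_surj: "V1 ` carrier R1 = carrier Rbar"
    and V1_ker: "a_kernel R1 Rbar V1 = P1"
    and V2: "V2 \<in> ring_hom R2 Rbar" and V2_surj: "V2 ` carrier R2 = carrier Rbar"
    and V2_ker: "a_kernel R2 Rbar V2 = P2"
    and M_mod: "module R M"
    and M_nonsep: "\<not> separated R R1 R2 P1 P2 M"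
    and rep: "sep_rep R R1 R2 P1 P2 S M \<phi>"
  shows "pap_multiplication_module R M \<longleftrightarrow> pap_multiplication_module R S"
proof -
  have "P1 = PIdl\<^bsub>R1\<^esub> p1" and "P2 = PIdl\<^bsub>R2\<^esub> p2" and "R = pullback_ring R1 R2 V1 V2"
    using assms(1-3) by simp_all
  moreover have "cring R" using M_mod unfolding module_def by blast
  ultimately interpret dvr_pullback R1 R2 Rbar V1 V2 p1 p2 P1 P2 R
    using p1 p2 dvr1 dvr2 field V1 V1_ker V2 V2_ker by (intro dvr_pullback.intro)
  have S: "module R S" by (rule sep_rep_module[OF rep M_mod])
  have M_nontrivial: "carrier M \<noteq> {\<zero>\<^bsub>M\<^esub>}"
    by (rule contrapos_nn[OF M_nonsep trivial_module_separated[OF M_mod]])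
  show ?thesis
  proof
    assume "pap_multiplication_module R M"
    then have "cyclic_module R M" by (rule pap_multiplication_module_imp_cyclic[OF M_mod M_nontrivial])
    then have "cyclic_module R S" by (rule sep_rep_cyclic[OF rep M_mod])
    then show "pap_multiplication_module R S" by (rule module.cyclic_imp_pap_multiplication_module[OF S])
  next
    assume "pap_multiplication_module R S"
    then show "pap_multiplication_module R M"
      by (rule module.pap_multiplication_module_image[OF S M_mod sep_rep_mod_hom[OF rep M_mod]
          sep_rep_onto[OF rep M_mod]])
  qed
qed

end
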